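(* Let $0<q<1$, let $s\ge1$ and let $a_1,\dots,a_s,b_1,\dots,b_s$ be positive integers with $\sum_{i=1}^s(a_i+b_i)>2$. Let $\theta$ be real with $|\theta|<1/q$ and $\theta\ne 1/q$, and put $\theta' := q\theta-1$. For tuples $\delta,\epsilon$ of $0$'s and $1$'s write $\delta\cdot\epsilon=\sum_i\delta_i\epsilon_i$ and $\overline\delta\cdot\overline\epsilon=\sum_i(1-\delta_i)(1-\epsilon_i)$. Then \[ \sum_{\substack{\delta,\epsilon\in\{0,1\}^s\\ \delta_1<a_1,\ \epsilon_s<b_s}} (-\theta)^{\overline{\delta}\cdot\overline{\epsilon}}(1-q)^{\delta\cdot\epsilon} f\Big[\prod_{i=1}^s x^{a_i-\delta_i}y^{b_i-\epsilon_i};\theta\Big] = \sum_{\substack{\delta,\epsilon\in \{0,1\}^{s+1}\\ \delta_{s+1}=\epsilon_1=0\\ \delta_1<a_1,\ \epsilon_{s+1}<b_s}} (-\theta')^{\overline{\delta}\cdot\overline{\epsilon}-1}(1-q)^{\delta\cdot\epsilon} f\Big[\prod_{i=1}^s x^{a_i-\delta_i}y^{b_i-\epsilon_{i+1}};\theta'\Big], \] where on the right $\overline\delta\cdot\overline\epsilon$ and $\delta\cdot\epsilon$ are sums over $i=1,\dots,s+1$, and the products of powers of $x,y$ are words (products in order $i=1,\dots,s$) in the non-commuting letters $x,y$.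
   Context: Fix $0<q<1$ and $[x]_q := (1-q^x)/(1-q)$. Let $x,y$ be non-commuting letters. Every word $w$ in $x,y$ that begins with $x$ and ends with $y$ can be written uniquely as $w=x^{k_1-1}y\,x^{k_2-1}y\cdots x^{k_n-1}y$ with integers $k_1\ge2$ and $k_j\ge1$ ($j\ge2$). For such $w$ and complex $\theta$ not of the form $q^{-\nu}[\nu]_q$ ($\nu$ a positive integer), define \[ f[w;\theta] := \sum_{m_1>\cdots>m_n>0}\prod_{j=1}^n \frac{q^{(k_j-1)m_j}}{[m_j]_q^{k_j-1}\big([m_j]_q-\theta q^{m_j}\big)} \] (sum over positive integers). For $|\theta|<1/q$ this equals $\sum_{m\ge0}\theta^m\sum_{c_1+\cdots+c_n=m,\ c_j\ge0}\zeta[k_1+c_1,\dots,k_n+c_n]$, where $\zeta[s_1,\dots,s_n] := \sum_{k_1>\cdots>k_n>0}\prod_j q^{(s_j-1)k_j}/[k_j]_q^{s_j}$ is the multiple $q$-zeta value. *)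

theory Defs
  imports "HOL-Analysis.Analysis" "HOL-Library.FuncSet"
begin

definition qint :: "real \<Rightarrow> nat \<Rightarrow> real" where
  "qint q m = (1 - q ^ m) / (1 - q)"

datatype letter = LX | LY

text \<open>Decomposition w = x^(k1-1) y x^(k2-1) y ... x^(kn-1) y: returns [k1,...,kn].
  The counter c is the number of x's seen since the last y.\<close>
fun word_ks_aux :: "nat \<Rightarrow> letter list \<Rightarrow> nat list" where
  "word_ks_aux c [] = []"
| "word_ks_aux c (LX # w) = word_ks_aux (Suc c) w"
| "word_ks_aux c (LY # w) = Suc c # word_ks_aux 0 w"

definition word_ks :: "letter list \<Rightarrow> nat list" where
  "word_ks w = word_ks_aux 0 w"

definition fq :: "real \<Rightarrow> letter list \<Rightarrow> complex \<Rightarrow> complex" where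
  "fq q w \<theta> =
     (let ks = word_ks w; n = length ks in
      infsum (\<lambda>ms. \<Prod>j<n.
                 complex_of_real (q ^ ((ks ! j - 1) * (ms ! j))) /
                 (complex_of_real (qint q (ms ! j)) ^ (ks ! j - 1) *
                  (complex_of_real (qint q (ms ! j)) - \<theta> * complex_of_real (q ^ (ms ! j)))))
        {ms. length ms = n \<and> sorted_wrt (>) ms \<and> (\<forall>m\<in>set ms. 0 < m)})"

definition xy_word :: "nat \<Rightarrow> (nat \<Rightarrow> nat) \<Rightarrow> (nat \<Rightarrow> nat) \<Rightarrow> letter list" where
  "xy_word s u v = concat (map (\<lambda>i. replicate (u i) LX @ replicate (v i) LY) [1..<s+1])"

end

(* Write f[w;theta] as the sum over m of (O_w delta0)(m), where O_w is read off w from the left: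
   x multiplies by xi(m) = q^m/[m]_q and y maps g to m |-> tau_theta(m) * (sum of g(p) for p < m),
   with tau_theta(m) = 1/([m]_q - theta q^m).  Summing over the choices (delta_i, epsilon_i) block
   by block, the left side becomes the series of L(m), a composition of one operator per block
   x^a_i y^b_i, and the right side the series of R(m)/(-theta'), a composition over the blocks
   y^b_(i-1) x^a_i.  The identities (1 - theta xi) tau_theta = 1/[m]_q, 1/[m]_q = xi + (1 - q) and
   tau_theta'(m) = tau_theta(m+1) show that each right block, multiplied by 1 - theta' xi, reproduces
   the matching left block.  Hence R = -theta' L termwise if a_1 >= 2, while for a_1 = 1 the partial
   sums of L - R/(-theta') telescope to (tau_theta'(N) - (1 - q)) times a polynomially bounded
   sequence, which is O(q^N). *)

theory Submission
  imports Defs "HOL-Real_Asymp.Real_Asymp"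
begin

section \<open>The letter operators\<close>

definition x_coeff :: "real \<Rightarrow> nat \<Rightarrow> real" where
  "x_coeff q m = q ^ m / qint q m"

definition y_coeff :: "real \<Rightarrow> real \<Rightarrow> nat \<Rightarrow> real" where
  "y_coeff q \<theta> m = 1 / (qint q m - \<theta> * q ^ m)"

definition inv_qint :: "real \<Rightarrow> nat \<Rightarrow> real" where
  "inv_qint q m = 1 / qint q m"

definition delta0 :: "nat \<Rightarrow> real" where
  "delta0 m = (if m = 0 then 1 else 0)"

definition sum_below :: "(nat \<Rightarrow> real) \<Rightarrow> nat \<Rightarrow> real" where
  "sum_below f m = (\<Sum>p<m. f p)"

definition sum_upto :: "(nat \<Rightarrow> real) \<Rightarrow> nat \<Rightarrow> real" where
  "sum_upto f m = (\<Sum>p\<le>m. f p)"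

definition y_op :: "real \<Rightarrow> real \<Rightarrow> (nat \<Rightarrow> real) \<Rightarrow> nat \<Rightarrow> real" where
  "y_op q \<theta> f m = y_coeff q \<theta> m * sum_below f m"

text \<open>Reading a word from the left, x multiplies by x_coeff and y applies y_op;
  f[w;theta] is then the sum over m of word_op w delta0 m.\<close>
fun word_op :: "real \<Rightarrow> real \<Rightarrow> letter list \<Rightarrow> (nat \<Rightarrow> real) \<Rightarrow> nat \<Rightarrow> real" where
  "word_op q \<theta> [] f m = f m"
| "word_op q \<theta> (LX # w) f m = x_coeff q m * word_op q \<theta> w f m"
| "word_op q \<theta> (LY # w) f m = y_op q \<theta> (word_op q \<theta> w f) m"

definition y_normalizer :: "real \<Rightarrow> real \<Rightarrow> nat \<Rightarrow> real" where
  "y_normalizer q \<theta> m = 1 - \<theta> * x_coeff q m"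

definition y_den_bound :: "real \<Rightarrow> real \<Rightarrow> real \<Rightarrow> bool" where
  "y_den_bound q \<theta> k \<longleftrightarrow> 0 < k \<and> (\<forall>m\<ge>1. k \<le> qint q m - \<theta> * q ^ m)"

lemma qint_0 [simp]: "qint q 0 = 0"
  by (simp add: qint_def)

lemma qint_Suc: "q \<noteq> 1 \<Longrightarrow> qint q (Suc m) = qint q m + q ^ m"
  by (simp add: qint_def field_simps)

lemma x_coeff_0 [simp]: "x_coeff q 0 = 0"
  by (simp add: x_coeff_def)

lemma inv_qint_0 [simp]: "inv_qint q 0 = 0"
  by (simp add: inv_qint_def)

lemma y_coeff_0: "y_coeff q \<theta> 0 = - 1 / \<theta>"
  by (simp add: y_coeff_def)

lemma sum_below_0 [simp]: "sum_below f 0 = 0"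
  by (simp add: sum_below_def)

lemma sum_below_Suc: "sum_below f (Suc m) = sum_upto f m"
  by (simp add: sum_below_def sum_upto_def lessThan_Suc_atMost)

lemma sum_upto_eq_sum_below: "sum_upto f m = sum_below f m + f m"
  by (simp add: sum_below_def sum_upto_def lessThan_Suc_atMost[symmetric])

lemma sum_upto_Suc: "sum_upto f (Suc m) = sum_upto f m + f (Suc m)"
  by (simp add: sum_upto_def)

lemma sum_upto_delta0 [simp]: "sum_upto delta0 m = 1"
  by (simp add: sum_upto_def delta0_def)

lemma y_op_0 [simp]: "y_op q \<theta> f 0 = 0"
  by (simp add: y_op_def)

locale q_param =
  fixes q :: real
  assumes q_pos: "0 < q" and q_less_1: "q < 1"
begin

lemma q_neq_1: "q \<noteq> 1"
  using q_less_1 by simp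

lemma qint_ge_1: "1 \<le> m \<Longrightarrow> 1 \<le> qint q m"
proof (induction m rule: dec_induct)
  case base
  then show ?case using q_neq_1 by (simp add: qint_def)
next
  case (step n)
  then show ?case using q_pos q_neq_1 by (simp add: qint_Suc add_increasing2)
qed

lemma qint_nonneg: "0 \<le> qint q m"
  by (cases "m = 0") (auto intro: order_trans[OF _ qint_ge_1])

lemma x_coeff_nonneg: "0 \<le> x_coeff q m"
  using qint_nonneg q_pos by (simp add: x_coeff_def)

lemma x_coeff_le_power: "x_coeff q m \<le> q ^ m"
proof (cases "m = 0")
  case False
  then have "1 \<le> qint q m" by (simp add: qint_ge_1)
  then show ?thesis using q_pos by (simp add: x_coeff_def divide_le_eq mult_le_cancel_left1)
qed simp

lemma abs_x_coeff_le_1: "\<bar>x_coeff q m\<bar> \<le> 1"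
  using x_coeff_nonneg x_coeff_le_power[of m] q_pos q_less_1
  by (simp add: order_trans[OF _ power_le_one])

lemma y_den_bound_of_abs_less:
  assumes "\<bar>\<theta>\<bar> < 1 / q"
  shows "y_den_bound q \<theta> (1 - \<bar>\<theta>\<bar> * q)"
  unfolding y_den_bound_def
proof (intro conjI allI impI)
  show "0 < 1 - \<bar>\<theta>\<bar> * q" using assms q_pos by (simp add: field_simps)
  fix m :: nat assume "1 \<le> m"
  then have "q ^ m \<le> q" using q_pos q_less_1 power_decreasing[of 1 m q] by simp
  then have "\<bar>\<theta>\<bar> * q ^ m \<le> \<bar>\<theta>\<bar> * q" by (rule mult_left_mono) simp
  moreover have "\<theta> * q ^ m \<le> \<bar>\<theta>\<bar> * q ^ m" using q_pos by (intro mult_right_mono) auto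
  ultimately have "\<theta> * q ^ m \<le> \<bar>\<theta>\<bar> * q" by linarith
  then show "1 - \<bar>\<theta>\<bar> * q \<le> qint q m - \<theta> * q ^ m" using qint_ge_1[OF \<open>1 \<le> m\<close>] by linarith
qed

lemma y_den_bound_of_nonpos: "\<theta> \<le> 0 \<Longrightarrow> y_den_bound q \<theta> 1"
  unfolding y_den_bound_def using qint_ge_1 q_pos
  by (smt (verit) mult_nonpos_nonneg zero_le_power)

lemma y_coeff_pos: "y_den_bound q \<theta> k \<Longrightarrow> 1 \<le> m \<Longrightarrow> 0 < y_coeff q \<theta> m"
  unfolding y_den_bound_def y_coeff_def by auto

lemma y_coeff_le: "y_den_bound q \<theta> k \<Longrightarrow> 1 \<le> m \<Longrightarrow> y_coeff q \<theta> m \<le> 1 / k"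
  unfolding y_den_bound_def y_coeff_def by (auto intro!: divide_left_mono)

lemma y_normalizer_mult_y_coeff:
  assumes "y_den_bound q \<theta> k" "1 \<le> m"
  shows "y_normalizer q \<theta> m * y_coeff q \<theta> m = inv_qint q m"
proof -
  have "qint q m \<noteq> 0" "qint q m - \<theta> * q ^ m \<noteq> 0"
    using qint_ge_1[OF assms(2)] assms unfolding y_den_bound_def by force+
  then show ?thesis by (simp add: y_normalizer_def x_coeff_def y_coeff_def inv_qint_def field_simps)
qed

lemma inv_qint_eq:
  assumes "1 \<le> m"
  shows "inv_qint q m = x_coeff q m + (1 - q)"
proof -
  have "qint q m \<noteq> 0" using qint_ge_1[OF assms] by simp
  moreover have "(1 - q) * qint q m = 1 - q ^ m" using q_neq_1 by (simp add: qint_def)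
  ultimately show ?thesis by (simp add: x_coeff_def inv_qint_def field_simps)
qed

lemma y_coeff_shift: "y_coeff q (q * \<theta> - 1) m = y_coeff q \<theta> (Suc m)"
  unfolding y_coeff_def by (simp add: qint_Suc[OF q_neq_1] algebra_simps)

end

lemma y_op_sum: "finite I \<Longrightarrow> y_op q \<theta> (\<lambda>p. \<Sum>i\<in>I. F i p) m = (\<Sum>i\<in>I. y_op q \<theta> (F i) m)"
  unfolding y_op_def sum_below_def by (simp add: sum_distrib_left sum.swap[of _ I])

lemma y_op_scale: "y_op q \<theta> (\<lambda>p. c * f p) m = c * y_op q \<theta> f m"
  unfolding y_op_def sum_below_def by (simp add: sum_distrib_left[symmetric] mult_ac)

lemma y_op_add: "y_op q \<theta> (\<lambda>p. f p + g p) m = y_op q \<theta> f m + y_op q \<theta> g m"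
  unfolding y_op_def sum_below_def by (simp add: sum.distrib algebra_simps)

lemma y_op_pow_at_0 [simp]: "(y_op q \<theta> ^^ k) f 0 = (if k = 0 then f 0 else 0)"
  by (cases k) auto

lemma funpow_Suc_apply: "(f ^^ Suc k) x = (f ^^ k) (f x)"
  by (simp add: funpow_Suc_right del: funpow.simps)

lemma word_op_Nil [simp]: "word_op q \<theta> [] f = f"
  by (rule ext) simp

lemma word_op_Cons_LY: "word_op q \<theta> (LY # w) f = y_op q \<theta> (word_op q \<theta> w f)"
  by (rule ext) simp

lemma word_op_sum:
  "finite I \<Longrightarrow> word_op q \<theta> w (\<lambda>p. \<Sum>i\<in>I. F i p) = (\<lambda>m. \<Sum>i\<in>I. word_op q \<theta> w (F i) m)"
proof (induction w)
  case (Cons l w)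
  then show ?case by (cases l) (auto simp: sum_distrib_left y_op_sum)
qed simp

lemma word_op_scale: "word_op q \<theta> w (\<lambda>p. c * f p) = (\<lambda>m. c * word_op q \<theta> w f m)"
proof (induction w)
  case (Cons l w)
  then show ?case by (cases l) (auto simp: y_op_scale)
qed simp

lemma word_op_append: "word_op q \<theta> (w1 @ w2) f = word_op q \<theta> w1 (word_op q \<theta> w2 f)"
proof (induction w1)
  case (Cons l w)
  then show ?case by (cases l) auto
qed simp

lemma word_op_replicate_LX:
  "word_op q \<theta> (replicate k LX @ w) f m = x_coeff q m ^ k * word_op q \<theta> w f m"
  by (induction k) auto

lemma word_op_replicate_LY:
  "word_op q \<theta> (replicate k LY @ w) f = (y_op q \<theta> ^^ k) (word_op q \<theta> w f)"
  by (induction k) (auto simp: word_op_Cons_LY)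

lemma word_op_replicate_LX_Nil [simp]: "word_op q \<theta> (replicate k LX) f m = x_coeff q m ^ k * f m"
  using word_op_replicate_LX[of q \<theta> k "[]"] by simp

lemma word_op_replicate_LY_Nil [simp]: "word_op q \<theta> (replicate k LY) f = (y_op q \<theta> ^^ k) f"
  using word_op_replicate_LY[of q \<theta> k "[]"] by simp

lemma word_op_xy_block:
  "word_op q \<theta> (replicate u LX @ replicate v LY) f m = x_coeff q m ^ u * (y_op q \<theta> ^^ v) f m"
  by (simp add: word_op_replicate_LX)

lemma word_op_yx_block:
  "word_op q \<theta> (replicate v LY @ replicate u LX) f = (y_op q \<theta> ^^ v) (\<lambda>p. x_coeff q p ^ u * f p)"
proof -
  have "word_op q \<theta> (replicate u LX) f = (\<lambda>p. x_coeff q p ^ u * f p)" by auto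
  then show ?thesis by (simp add: word_op_replicate_LY)
qed

lemma y_op_pow_sum:
  "finite I \<Longrightarrow> (y_op q \<theta> ^^ k) (\<lambda>p. \<Sum>i\<in>I. F i p) m = (\<Sum>i\<in>I. (y_op q \<theta> ^^ k) (F i) m)"
  using word_op_sum[of I q \<theta> "replicate k LY" F] by simp

lemma y_op_pow_scale: "(y_op q \<theta> ^^ k) (\<lambda>p. c * f p) m = c * (y_op q \<theta> ^^ k) f m"
  using word_op_scale[of q \<theta> "replicate k LY" c f] by simp

lemma y_op_pow_add:
  "(y_op q \<theta> ^^ k) (\<lambda>p. f p + g p) m = (y_op q \<theta> ^^ k) f m + (y_op q \<theta> ^^ k) g m"
  using y_op_pow_sum[where I = "{0::nat, 1}" and F = "\<lambda>i. if i = 0 then f else g"] by simp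

text \<open>Both sides of the theorem are sums over (delta, epsilon) of a product of weights
  W i (delta i) (epsilon i) times the operator of a concatenation of blocks B i (delta i) (epsilon i);
  this sum factors as a composition of one operator per block.\<close>

definition block_op ::
  "real \<Rightarrow> real \<Rightarrow> (nat \<Rightarrow> nat \<Rightarrow> nat \<Rightarrow> real) \<Rightarrow> (nat \<Rightarrow> nat \<Rightarrow> nat \<Rightarrow> letter list)
    \<Rightarrow> nat \<Rightarrow> (nat \<Rightarrow> real) \<Rightarrow> nat \<Rightarrow> real" where
  "block_op q \<theta> W B i f m = (\<Sum>d\<in>{0,1::nat}. \<Sum>e\<in>{0,1::nat}. W i d e * word_op q \<theta> (B i d e) f m)"

fun block_comp ::
  "real \<Rightarrow> real \<Rightarrow> (nat \<Rightarrow> nat \<Rightarrow> nat \<Rightarrow> real) \<Rightarrow> (nat \<Rightarrow> nat \<Rightarrow> nat \<Rightarrow> letter list)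
    \<Rightarrow> nat \<Rightarrow> (nat \<Rightarrow> real) \<Rightarrow> nat \<Rightarrow> real" where
  "block_comp q \<theta> W B 0 f = f"
| "block_comp q \<theta> W B (Suc n) f = block_comp q \<theta> W B n (block_op q \<theta> W B (Suc n) f)"

fun block_tail ::
  "real \<Rightarrow> real \<Rightarrow> (nat \<Rightarrow> nat \<Rightarrow> nat \<Rightarrow> real) \<Rightarrow> (nat \<Rightarrow> nat \<Rightarrow> nat \<Rightarrow> letter list)
    \<Rightarrow> nat \<Rightarrow> nat \<Rightarrow> nat \<Rightarrow> real" where
  "block_tail q \<theta> W B n 0 = delta0"
| "block_tail q \<theta> W B n (Suc j) = block_op q \<theta> W B (n - j) (block_tail q \<theta> W B n j)"

lemma sum_01_01:
  "(\<Sum>d\<in>{0,1::nat}. \<Sum>e\<in>{0,1::nat}. F d e) = F 0 0 + F 0 1 + F 1 0 + F 1 1"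
  by (simp add: add.assoc)

lemma block_comp_block_tail:
  "n \<le> N \<Longrightarrow> block_comp q \<theta> W B n (block_tail q \<theta> W B N (N - n)) = block_tail q \<theta> W B N N"
proof (induction n)
  case (Suc n)
  then have "N - n = Suc (N - Suc n)" "N - (N - Suc n) = Suc n" by simp_all
  then show ?case using Suc by (metis block_comp.simps(2) block_tail.simps(2) Suc_leD)
qed simp

lemma sum_PiE_insert:
  assumes "x \<notin> S"
  shows "(\<Sum>g\<in>Pi\<^sub>E (insert x S) T. h g) = (\<Sum>y\<in>T x. \<Sum>g\<in>Pi\<^sub>E S T. h (g(x := y)))"
proof -
  have "(\<Sum>g\<in>Pi\<^sub>E (insert x S) T. h g) = (\<Sum>g\<in>(\<lambda>(y, g). g(x := y)) ` (T x \<times> Pi\<^sub>E S T). h g)"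
    by (simp add: PiE_insert_eq)
  also have "\<dots> = (\<Sum>(y, g)\<in>T x \<times> Pi\<^sub>E S T. h (g(x := y)))"
    by (subst sum.reindex[OF inj_combinator[OF assms]]) (simp add: comp_def case_prod_beta')
  also have "\<dots> = (\<Sum>y\<in>T x. \<Sum>g\<in>Pi\<^sub>E S T. h (g(x := y)))"
    by (simp add: sum.cartesian_product)
  finally show ?thesis .
qed

lemma sum_PiE_block_words_eq_block_comp:
  "(\<Sum>\<delta>\<in>{1..n} \<rightarrow>\<^sub>E {0,1::nat}. \<Sum>\<epsilon>\<in>{1..n} \<rightarrow>\<^sub>E {0,1::nat}.
      (\<Prod>i\<in>{1..n}. W i (\<delta> i) (\<epsilon> i)) * word_op q \<theta> (concat (map (\<lambda>i. B i (\<delta> i) (\<epsilon> i)) [1..<n+1])) f m)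
   = block_comp q \<theta> W B n f m"
proof (induction n arbitrary: f)
  case (Suc n)
  let ?P = "{1..n} \<rightarrow>\<^sub>E {0,1::nat}"
  let ?C = "\<lambda>\<delta> \<epsilon>. concat (map (\<lambda>i. B i (\<delta> i) (\<epsilon> i)) [1..<n+1])"
  let ?W = "\<lambda>\<delta> \<epsilon>. \<Prod>i\<in>{1..n}. W i (\<delta> i) (\<epsilon> i)"
  have ins: "{1..Suc n} = insert (Suc n) {1..n}" and Suc_n_not_in: "Suc n \<notin> {1..n}" by auto
  have word: "concat (map (\<lambda>i. B i ((\<delta>(Suc n := d)) i) ((\<epsilon>(Suc n := e)) i)) [1..<Suc n+1])
      = ?C \<delta> \<epsilon> @ B (Suc n) d e" for \<delta> \<epsilon> d e
  proof -
    have "map (\<lambda>i. B i ((\<delta>(Suc n := d)) i) ((\<epsilon>(Suc n := e)) i)) [1..<n+1] = map (\<lambda>i. B i (\<delta> i) (\<epsilon> i)) [1..<n+1]"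
      by (rule map_cong) auto
    moreover have "[1..<Suc n+1] = [1..<n+1] @ [Suc n]" by simp
    ultimately show ?thesis by (simp only: map_append concat_append) simp
  qed
  have weight: "(\<Prod>i\<in>{1..Suc n}. W i ((\<delta>(Suc n := d)) i) ((\<epsilon>(Suc n := e)) i))
      = W (Suc n) d e * ?W \<delta> \<epsilon>" for \<delta> \<epsilon> d e
  proof -
    have "(\<Prod>i\<in>{1..n}. W i ((\<delta>(Suc n := d)) i) ((\<epsilon>(Suc n := e)) i)) = ?W \<delta> \<epsilon>"
      by (rule prod.cong) auto
    then show ?thesis by (simp add: ins)
  qed
  have "(\<Sum>\<delta>\<in>{1..Suc n} \<rightarrow>\<^sub>E {0,1::nat}. \<Sum>\<epsilon>\<in>{1..Suc n} \<rightarrow>\<^sub>E {0,1::nat}.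
      (\<Prod>i\<in>{1..Suc n}. W i (\<delta> i) (\<epsilon> i)) * word_op q \<theta> (concat (map (\<lambda>i. B i (\<delta> i) (\<epsilon> i)) [1..<Suc n+1])) f m)
    = (\<Sum>d\<in>{0,1}. \<Sum>\<delta>\<in>?P. \<Sum>e\<in>{0,1}. \<Sum>\<epsilon>\<in>?P.
         W (Suc n) d e * ?W \<delta> \<epsilon> * word_op q \<theta> (?C \<delta> \<epsilon>) (word_op q \<theta> (B (Suc n) d e) f) m)"
    unfolding ins sum_PiE_insert[OF Suc_n_not_in]
    by (simp only: ins[symmetric] word weight word_op_append)
  also have "\<dots> = (\<Sum>\<delta>\<in>?P. \<Sum>\<epsilon>\<in>?P. \<Sum>d\<in>{0,1}. \<Sum>e\<in>{0,1}.
         ?W \<delta> \<epsilon> * word_op q \<theta> (?C \<delta> \<epsilon>) (\<lambda>p. W (Suc n) d e * word_op q \<theta> (B (Suc n) d e) f p) m)"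
    unfolding sum.swap[where A = "{0,1}" and B = ?P] by (simp only: word_op_scale mult_ac)
  also have "\<dots> = (\<Sum>\<delta>\<in>?P. \<Sum>\<epsilon>\<in>?P. ?W \<delta> \<epsilon> * word_op q \<theta> (?C \<delta> \<epsilon>) (block_op q \<theta> W B (Suc n) f) m)"
    by (simp only: block_op_def[abs_def] word_op_sum finite.emptyI finite_insert sum_distrib_left)
  also have "\<dots> = block_comp q \<theta> W B (Suc n) f m"
    using Suc by simp
  finally show ?case .
qed simp

section \<open>f[w;theta] as a series of the word operator\<close>

definition fq_factor :: "real \<Rightarrow> real \<Rightarrow> nat \<Rightarrow> nat \<Rightarrow> real" where
  "fq_factor q \<theta> k m = q ^ ((k - 1) * m) / (qint q m ^ (k - 1) * (qint q m - \<theta> * q ^ m))"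

text \<open>nested_term ks m is the sum of the summand of f over the tuples (m, m_2, ..., m_n).\<close>
fun nested_term :: "real \<Rightarrow> real \<Rightarrow> nat list \<Rightarrow> nat \<Rightarrow> real" where
  "nested_term q \<theta> [] m = delta0 m"
| "nested_term q \<theta> (k # ks) m =
     (if m = 0 then 0 else fq_factor q \<theta> k m * sum_below (nested_term q \<theta> ks) m)"

definition desc_tuples :: "nat \<Rightarrow> nat list set" where
  "desc_tuples n = {ms. length ms = n \<and> sorted_wrt (>) ms \<and> (\<forall>m\<in>set ms. 0 < m)}"

definition desc_tuples_below :: "nat \<Rightarrow> nat \<Rightarrow> nat list set" where
  "desc_tuples_below n N = {ms \<in> desc_tuples n. \<forall>m\<in>set ms. m < N}"

lemma fq_factor_eq: "fq_factor q \<theta> k m = x_coeff q m ^ (k - 1) * y_coeff q \<theta> m"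
proof -
  have "q ^ ((k - 1) * m) = (q ^ m) ^ (k - 1)" by (simp add: power_mult[symmetric] mult.commute)
  then show ?thesis by (simp add: fq_factor_def x_coeff_def y_coeff_def power_divide)
qed

lemma word_op_eq_nested_term:
  "w \<noteq> [] \<Longrightarrow> last w = LY \<Longrightarrow>
    x_coeff q m ^ c * word_op q \<theta> w delta0 m = nested_term q \<theta> (word_ks_aux c w) m"
proof (induction w arbitrary: c m)
  case (Cons l w)
  show ?case
  proof (cases l)
    case LX
    with Cons.prems have "w \<noteq> []" "last w = LY" by (auto split: if_splits)
    then show ?thesis using Cons.IH[where c = "Suc c"] LX by (simp add: mult_ac)
  next
    case LY
    have "word_op q \<theta> w delta0 = nested_term q \<theta> (word_ks_aux 0 w)" if "w \<noteq> []"
    proof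
      fix p
      have "last w = LY" using Cons.prems that by simp
      then show "word_op q \<theta> w delta0 p = nested_term q \<theta> (word_ks_aux 0 w) p"
        using Cons.IH[where c = 0 and m = p] that by simp
    qed
    then show ?thesis using LY by (cases "w = []") (auto simp: y_op_def sum_below_def fq_factor_eq mult_ac)
  qed
qed simp

lemma finite_desc_tuples_below: "finite (desc_tuples_below n N)"
proof (rule finite_subset)
  show "desc_tuples_below n N \<subseteq> {ms. set ms \<subseteq> {..<N} \<and> length ms = n}"
    unfolding desc_tuples_below_def desc_tuples_def by auto
qed (simp add: finite_lists_length_eq)

lemma desc_tuples_below_Suc:
  "desc_tuples_below (Suc n) N = (\<lambda>(m, ms). m # ms) ` (SIGMA m:{1..<N}. desc_tuples_below n m)"
proof (intro equalityI subsetI)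
  fix ms assume ms: "ms \<in> desc_tuples_below (Suc n) N"
  then obtain m t where "ms = m # t" "length t = n"
    unfolding desc_tuples_below_def desc_tuples_def by (auto simp: length_Suc_conv)
  with ms show "ms \<in> (\<lambda>(m, ms). m # ms) ` (SIGMA m:{1..<N}. desc_tuples_below n m)"
    unfolding desc_tuples_below_def desc_tuples_def by force
qed (fastforce simp: desc_tuples_below_def desc_tuples_def intro: less_trans)

lemma sum_desc_tuples_below:
  "1 \<le> N \<Longrightarrow> (\<Sum>ms\<in>desc_tuples_below (length ks) N. \<Prod>j<length ks. fq_factor q \<theta> (ks ! j) (ms ! j))
    = (\<Sum>m<N. nested_term q \<theta> ks m)"
proof (induction ks arbitrary: N)
  case Nil
  have "desc_tuples_below 0 N = {[]}" unfolding desc_tuples_below_def desc_tuples_def by auto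
  then show ?case using Nil by (simp add: delta0_def lessThan_def)
next
  case (Cons k ks)
  let ?n = "length ks"
  have inj: "inj_on (\<lambda>(m, ms). m # ms) (SIGMA m:{1..<N}. desc_tuples_below ?n m)"
    by (auto simp: inj_on_def)
  have "(\<Sum>ms\<in>desc_tuples_below (length (k # ks)) N. \<Prod>j<length (k # ks). fq_factor q \<theta> ((k # ks) ! j) (ms ! j))
      = (\<Sum>(m, ms)\<in>(SIGMA m:{1..<N}. desc_tuples_below ?n m). \<Prod>j<Suc ?n. fq_factor q \<theta> ((k # ks) ! j) ((m # ms) ! j))"
    unfolding length_Cons desc_tuples_below_Suc sum.reindex[OF inj] by (rule sum.cong) auto
  also have "\<dots> = (\<Sum>m\<in>{1..<N}. fq_factor q \<theta> k m * (\<Sum>ms\<in>desc_tuples_below ?n m. \<Prod>j<?n. fq_factor q \<theta> (ks ! j) (ms ! j)))"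
    by (simp add: sum.Sigma[symmetric] finite_desc_tuples_below prod.lessThan_Suc_shift sum_distrib_left
        del: prod.lessThan_Suc)
  also have "\<dots> = (\<Sum>m\<in>{1..<N}. nested_term q \<theta> (k # ks) m)"
    using Cons.IH by (intro sum.cong) (auto simp: sum_below_def)
  also have "\<dots> = (\<Sum>m<N. nested_term q \<theta> (k # ks) m)"
    by (rule sum.mono_neutral_left) auto
  finally show ?case .
qed

lemma nonneg_has_sum_of_exhausting:
  fixes G :: "'a \<Rightarrow> real"
  assumes nonneg: "\<And>x. x \<in> S \<Longrightarrow> 0 \<le> G x"
    and fin: "\<And>N. finite (A N)" and sub: "\<And>N. A N \<subseteq> S" and mono: "incseq A"
    and exhaust: "\<And>F. finite F \<Longrightarrow> F \<subseteq> S \<Longrightarrow> \<exists>N. F \<subseteq> A N"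
    and lim: "(\<lambda>N. sum G (A N)) \<longlonglongrightarrow> V"
  shows "(G has_sum V) S"
proof -
  have "incseq (\<lambda>N. sum G (A N))"
    using nonneg sub mono by (intro incseq_SucI sum_mono2 fin) (auto simp: incseq_Suc_iff)
  then have le_V: "sum G (A N) \<le> V" for N
    using lim by (rule incseq_le)
  have finite_le_V: "sum G F \<le> V" if "finite F" "F \<subseteq> S" for F
  proof -
    obtain N where "F \<subseteq> A N" using exhaust[OF \<open>finite F\<close> \<open>F \<subseteq> S\<close>] by blast
    then have "sum G F \<le> sum G (A N)" using nonneg sub by (intro sum_mono2 fin) auto
    then show ?thesis using le_V[of N] by linarith
  qed
  have summable: "G summable_on S"
    by (rule nonneg_bdd_above_summable_on[OF nonneg]) (auto intro!: bdd_aboveI finite_le_V)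
  have "infsum G S \<le> V"
    by (rule infsum_le_finite_sums[OF summable finite_le_V])
  moreover have "V \<le> infsum G S"
    using lim by (rule LIMSEQ_le_const2)
      (use nonneg sub in \<open>auto intro!: finite_sum_le_infsum[OF summable fin]\<close>)
  ultimately show ?thesis using summable by (simp add: has_sum_iff)
qed

context q_param
begin

lemma fq_factor_nonneg: "y_den_bound q \<theta> k \<Longrightarrow> 1 \<le> m \<Longrightarrow> 0 \<le> fq_factor q \<theta> c m"
  using x_coeff_nonneg y_coeff_pos[of \<theta> k m] by (simp add: fq_factor_eq)

lemma fq_eq_suminf_word_op:
  assumes bound: "y_den_bound q \<theta> k" and w: "w \<noteq> []" "last w = LY"
    and sums: "(\<lambda>m. word_op q \<theta> w delta0 m) sums V"
  shows "fq q w (complex_of_real \<theta>) = complex_of_real V"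
proof -
  define ks where "ks = word_ks w"
  define G where "G ms = (\<Prod>j<length ks. fq_factor q \<theta> (ks ! j) (ms ! j))" for ms
  have G_nonneg: "0 \<le> G ms" if "ms \<in> desc_tuples (length ks)" for ms
    using that bound unfolding G_def desc_tuples_def
    by (auto intro!: prod_nonneg fq_factor_nonneg simp: Suc_le_eq)
  have exhaust: "\<exists>N. F \<subseteq> desc_tuples_below (length ks) (Suc N)"
    if "finite F" "F \<subseteq> desc_tuples (length ks)" for F
  proof
    have "m \<le> Max (\<Union>(set ` F))" if "ms \<in> F" "m \<in> set ms" for ms m
      using that \<open>finite F\<close> by (intro Max_ge) auto
    then show "F \<subseteq> desc_tuples_below (length ks) (Suc (Max (\<Union>(set ` F))))"
      using that unfolding desc_tuples_below_def by (auto simp: less_Suc_eq_le)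
  qed
  have "word_op q \<theta> w delta0 m = nested_term q \<theta> ks m" for m
    using word_op_eq_nested_term[OF w, where c = 0] by (simp add: ks_def word_ks_def)
  then have "(\<lambda>N. \<Sum>m<N. nested_term q \<theta> ks m) \<longlonglongrightarrow> V"
    using sums by (simp add: sums_def)
  then have "(\<lambda>N. \<Sum>m<Suc N. nested_term q \<theta> ks m) \<longlonglongrightarrow> V"
    by (rule LIMSEQ_Suc)
  moreover have "sum G (desc_tuples_below (length ks) (Suc N)) = (\<Sum>m<Suc N. nested_term q \<theta> ks m)" for N
    unfolding G_def by (rule sum_desc_tuples_below) simp
  ultimately have "(G has_sum V) (desc_tuples (length ks))"
    using G_nonneg exhaust finite_desc_tuples_below
    by (intro nonneg_has_sum_of_exhausting[where A = "\<lambda>N. desc_tuples_below (length ks) (Suc N)"])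
      (auto simp: desc_tuples_below_def incseq_def)
  then have "((\<lambda>ms. complex_of_real (G ms)) has_sum complex_of_real V) (desc_tuples (length ks))"
    by (rule has_sum_of_real)
  then show ?thesis
    unfolding fq_def Let_def ks_def[symmetric]
    by (simp add: G_def fq_factor_def desc_tuples_def infsumI)
qed

end

section \<open>Block identities\<close>

text \<open>The term p = 0 uses y_coeff q t 0 = -1/t; for t = q theta - 1 this is y_coeff q theta 1,
  as sum_upto_y_op requires.\<close>
definition y_sum :: "real \<Rightarrow> real \<Rightarrow> (nat \<Rightarrow> real) \<Rightarrow> nat \<Rightarrow> real" where
  "y_sum q t f m = (\<Sum>p<m. y_coeff q t p * f p)"

text \<open>A left block with parameter theta, once its leading x-powers are factored out, and a right
  block with parameter theta' = q theta - 1, once multiplied by y_normalizer, both reduce to link_op;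
  link_op_last handles the last left block when b_s = 1 forbids epsilon_s = 1.\<close>
definition link_op :: "real \<Rightarrow> real \<Rightarrow> nat \<Rightarrow> (nat \<Rightarrow> real) \<Rightarrow> nat \<Rightarrow> real" where
  "link_op q t k f m = inv_qint q m * (y_sum q t ^^ (k - 1)) (sum_upto f) m"

definition link_op_last :: "real \<Rightarrow> real \<Rightarrow> nat \<Rightarrow> (nat \<Rightarrow> real) \<Rightarrow> nat \<Rightarrow> real" where
  "link_op_last q t k f m = (if 2 \<le> k then link_op q t k f m else inv_qint q m * sum_below f m)"

definition block_weight :: "real \<Rightarrow> real \<Rightarrow> nat \<Rightarrow> nat \<Rightarrow> real" where
  "block_weight q t d e = t ^ ((1 - d) * (1 - e)) * (1 - q) ^ (d * e)"

text \<open>The four (delta_i, epsilon_i) terms of a right block once the common factors y_op^(b - 1)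
  and x^(a - 1) are pulled out (lemma theta'_block_sum).\<close>
definition block_core :: "real \<Rightarrow> real \<Rightarrow> (nat \<Rightarrow> real) \<Rightarrow> nat \<Rightarrow> real" where
  "block_core q t \<phi> p =
     - t * y_op q t (\<lambda>r. x_coeff q r * \<phi> r) p + x_coeff q p * \<phi> p + y_op q t \<phi> p + (1 - q) * \<phi> p"

lemma block_weight_simps [simp]:
  "block_weight q t 0 0 = t" "block_weight q t 0 1 = 1" "block_weight q t 1 0 = 1"
  "block_weight q t 1 1 = 1 - q" "block_weight q t 0 (Suc 0) = 1" "block_weight q t (Suc 0) 0 = 1"
  "block_weight q t (Suc 0) (Suc 0) = 1 - q"
  by (simp_all add: block_weight_def)

lemma y_normalizer_0 [simp]: "y_normalizer q t 0 = 1"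
  by (simp add: y_normalizer_def)

lemma y_sum_scale: "y_sum q t (\<lambda>p. c * f p) m = c * y_sum q t f m"
  by (simp add: y_sum_def sum_distrib_left mult_ac)

lemma y_sum_pow_scale: "(y_sum q t ^^ k) (\<lambda>p. c * f p) m = c * (y_sum q t ^^ k) f m"
proof (induction k arbitrary: m)
  case (Suc k)
  have "(y_sum q t ^^ k) (\<lambda>p. c * f p) = (\<lambda>m. c * (y_sum q t ^^ k) f m)" using Suc by auto
  then show ?case by (simp add: y_sum_scale)
qed simp

lemma link_op_scale: "link_op q t k (\<lambda>p. c * f p) m = c * link_op q t k f m"
proof -
  have "sum_upto (\<lambda>p. c * f p) = (\<lambda>m. c * sum_upto f m)"
    by (auto simp: sum_upto_def sum_distrib_left)
  then show ?thesis by (simp add: link_op_def y_sum_pow_scale)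
qed

lemma link_op_at_0 [simp]: "link_op q t k f 0 = 0"
  by (simp add: link_op_def)

lemma link_op_last_at_0 [simp]: "link_op_last q t k f 0 = 0"
  by (simp add: link_op_last_def)

lemma sum_below_y_op: "sum_below (y_op q t g) = y_sum q t (sum_below g)"
  by (auto simp: sum_below_def y_sum_def y_op_def)

lemma sum_below_y_op_pow: "sum_below ((y_op q t ^^ k) g) = (y_sum q t ^^ k) (sum_below g)"
  by (induction k) (simp_all add: sum_below_y_op)

context q_param
begin

lemma sum_upto_y_op: "sum_upto (y_op q \<theta> g) m = y_sum q (q * \<theta> - 1) (sum_upto g) m"
proof (induction m)
  case (Suc m)
  have "sum_upto (y_op q \<theta> g) (Suc m) = sum_upto (y_op q \<theta> g) m + y_coeff q \<theta> (Suc m) * sum_upto g m"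
    by (simp add: sum_upto_Suc y_op_def sum_below_Suc)
  also have "\<dots> = y_sum q (q * \<theta> - 1) (sum_upto g) (Suc m)"
    using Suc by (simp add: y_sum_def y_coeff_shift)
  finally show ?case .
qed (simp add: sum_upto_def y_sum_def)

lemma sum_upto_y_op_pow: "sum_upto ((y_op q \<theta> ^^ k) f) = (y_sum q (q * \<theta> - 1) ^^ k) (sum_upto f)"
  by (induction k) (auto simp: sum_upto_y_op)

lemma theta_block_sum:
  assumes bound: "y_den_bound q \<theta> k" and "1 \<le> a" "1 \<le> b"
    and at_0: "(y_op q \<theta> ^^ (b - 1)) \<psi> 0 = 0"
  shows "(\<Sum>d\<in>{0,1::nat}. \<Sum>e\<in>{0,1::nat}. block_weight q (- \<theta>) d e *
            word_op q \<theta> (replicate (a - d) LX @ replicate (b - e) LY) \<psi> m)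
       = x_coeff q m ^ (a - 1) * link_op q (q * \<theta> - 1) b \<psi> m"
proof -
  define \<phi> where "\<phi> = (y_op q \<theta> ^^ (b - 1)) \<psi>"
  obtain a' b' where ab: "a = Suc a'" "b = Suc b'" using assms(2,3) by (cases a; cases b) auto
  have core: "- \<theta> * x_coeff q m * y_op q \<theta> \<phi> m + x_coeff q m * \<phi> m + y_op q \<theta> \<phi> m + (1 - q) * \<phi> m
      = inv_qint q m * sum_upto \<phi> m"
  proof (cases "m = 0")
    case True
    then show ?thesis using at_0 by (simp add: \<phi>_def sum_upto_def)
  next
    case False
    have "- \<theta> * x_coeff q m * y_op q \<theta> \<phi> m + x_coeff q m * \<phi> m + y_op q \<theta> \<phi> m + (1 - q) * \<phi> m
        = y_normalizer q \<theta> m * y_coeff q \<theta> m * sum_below \<phi> m + (x_coeff q m + (1 - q)) * \<phi> m"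
      by (simp add: y_normalizer_def y_op_def algebra_simps)
    also have "\<dots> = inv_qint q m * sum_below \<phi> m + inv_qint q m * \<phi> m"
      using False y_normalizer_mult_y_coeff[OF bound, of m] inv_qint_eq[of m] by simp
    finally show ?thesis by (simp add: sum_upto_eq_sum_below algebra_simps)
  qed
  have "(\<Sum>d\<in>{0,1::nat}. \<Sum>e\<in>{0,1::nat}. block_weight q (- \<theta>) d e *
            word_op q \<theta> (replicate (a - d) LX @ replicate (b - e) LY) \<psi> m)
      = x_coeff q m ^ a' * (- \<theta> * x_coeff q m * y_op q \<theta> \<phi> m + x_coeff q m * \<phi> m
          + y_op q \<theta> \<phi> m + (1 - q) * \<phi> m)"
    unfolding sum_01_01 word_op_xy_block by (simp add: ab \<phi>_def algebra_simps)
  then show ?thesis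
    unfolding core by (simp add: ab \<phi>_def link_op_def sum_upto_y_op_pow)
qed

lemma theta_block_sum_last:
  assumes bound: "y_den_bound q \<theta> k" and "1 \<le> a"
  shows "(\<Sum>d\<in>{0,1::nat}. block_weight q (- \<theta>) d 0 *
            word_op q \<theta> (replicate (a - d) LX @ replicate 1 LY) \<psi> m)
       = x_coeff q m ^ (a - 1) * (inv_qint q m * sum_below \<psi> m)"
proof (cases "m = 0")
  case False
  obtain a' where a: "a = Suc a'" using assms(2) by (cases a) auto
  have "(\<Sum>d\<in>{0,1::nat}. block_weight q (- \<theta>) d 0 *
            word_op q \<theta> (replicate (a - d) LX @ replicate 1 LY) \<psi> m)
      = x_coeff q m ^ a' * (y_normalizer q \<theta> m * y_coeff q \<theta> m * sum_below \<psi> m)"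
    by (simp add: a word_op_replicate_LX y_op_def y_normalizer_def algebra_simps)
  then show ?thesis using False y_normalizer_mult_y_coeff[OF bound, of m] by (simp add: a)
qed (simp add: word_op_replicate_LX)

lemma y_normalizer_y_op_pow:
  assumes bound: "y_den_bound q t k" and "1 \<le> j"
  shows "y_normalizer q t m * (y_op q t ^^ j) h m = inv_qint q m * (y_sum q t ^^ (j - 1)) (sum_below h) m"
proof -
  obtain i where j: "j = Suc i" using assms(2) by (cases j) auto
  have "y_normalizer q t m * y_op q t g m = inv_qint q m * sum_below g m" for g
    using y_normalizer_mult_y_coeff[OF bound, of m] by (cases "m = 0") (simp_all add: y_op_def)
  then show ?thesis by (simp add: j sum_below_y_op_pow)
qed

lemma block_core_eq:
  assumes "\<phi> 0 = 0"
  shows "block_core q t \<phi> p = y_op q t (\<lambda>r. y_normalizer q t r * \<phi> r) p + inv_qint q p * \<phi> p"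
proof (cases "p = 0")
  case False
  have "y_op q t (\<lambda>r. y_normalizer q t r * \<phi> r) p = - t * y_op q t (\<lambda>r. x_coeff q r * \<phi> r) p + y_op q t \<phi> p"
    unfolding y_normalizer_def by (simp add: algebra_simps y_op_add[symmetric] y_op_scale[symmetric])
  moreover have "inv_qint q p = x_coeff q p + (1 - q)"
    using inv_qint_eq[of p] False by simp
  ultimately show ?thesis by (simp add: block_core_def distrib_right)
qed (use assms in \<open>simp add: block_core_def\<close>)

lemma y_normalizer_y_op_pow_block_core:
  assumes bound: "y_den_bound q t k" and at_0: "\<phi> 0 = 0"
  shows "y_normalizer q t m * (y_op q t ^^ j) (block_core q t \<phi>) m
       = inv_qint q m * (y_sum q t ^^ j) (sum_upto (\<lambda>p. y_normalizer q t p * \<phi> p)) m"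
proof (cases j)
  case 0
  have "y_normalizer q t m * block_core q t \<phi> m = inv_qint q m * sum_upto (\<lambda>p. y_normalizer q t p * \<phi> p) m"
    using y_normalizer_y_op_pow[OF bound, of 1 m] at_0
    by (cases "m = 0") (simp_all add: block_core_eq sum_upto_eq_sum_below algebra_simps)
  then show ?thesis using 0 by simp
next
  case (Suc i)
  have "sum_below (block_core q t \<phi>) m = y_sum q t (sum_upto (\<lambda>p. y_normalizer q t p * \<phi> p)) m" for m
  proof -
    have eq: "inv_qint q p * \<phi> p = y_coeff q t p * (y_normalizer q t p * \<phi> p)" for p
      using y_normalizer_mult_y_coeff[OF bound, of p] at_0 by (cases "p = 0") (simp_all add: mult_ac)
    have "sum_below (block_core q t \<phi>) m
        = sum_below (y_op q t (\<lambda>r. y_normalizer q t r * \<phi> r)) m + (\<Sum>p<m. inv_qint q p * \<phi> p)"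
      by (simp add: block_core_eq[of \<phi> t, OF at_0] sum_below_def sum.distrib)
    also have "(\<Sum>p<m. inv_qint q p * \<phi> p) = y_sum q t (\<lambda>r. y_normalizer q t r * \<phi> r) m"
      unfolding y_sum_def by (intro sum.cong refl eq)
    finally show ?thesis
      by (simp add: sum_below_y_op y_sum_def sum_upto_eq_sum_below sum.distrib algebra_simps)
  qed
  then have "sum_below (block_core q t \<phi>) = y_sum q t (sum_upto (\<lambda>p. y_normalizer q t p * \<phi> p))" ..
  then show ?thesis
    using y_normalizer_y_op_pow[OF bound, of j m "block_core q t \<phi>"] Suc
    by (simp add: funpow_swap1)
qed

lemma theta'_block_sum:
  assumes "1 \<le> a" "1 \<le> b"
  shows "(\<Sum>d\<in>{0,1::nat}. \<Sum>e\<in>{0,1::nat}. block_weight q (- t) d e *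
            (y_op q t ^^ (b - e)) (\<lambda>p. x_coeff q p ^ (a - d) * \<psi> p) m)
       = (y_op q t ^^ (b - 1)) (block_core q t (\<lambda>p. x_coeff q p ^ (a - 1) * \<psi> p)) m"
proof -
  obtain a' b' where ab: "a = Suc a'" "b = Suc b'" using assms by (cases a; cases b) auto
  define \<phi> where "\<phi> = (\<lambda>p. x_coeff q p ^ a' * \<psi> p)"
  have "(\<Sum>d\<in>{0,1::nat}. \<Sum>e\<in>{0,1::nat}. block_weight q (- t) d e *
            (y_op q t ^^ (b - e)) (\<lambda>p. x_coeff q p ^ (a - d) * \<psi> p) m)
      = - t * (y_op q t ^^ b') (y_op q t (\<lambda>p. x_coeff q p * \<phi> p)) m
        + (y_op q t ^^ b') (\<lambda>p. x_coeff q p * \<phi> p) m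
        + (y_op q t ^^ b') (y_op q t \<phi>) m + (1 - q) * (y_op q t ^^ b') \<phi> m"
    by (simp add: ab \<phi>_def mult.assoc funpow_Suc_apply del: funpow.simps)
  also have "\<dots> = (y_op q t ^^ b') (block_core q t \<phi>) m"
    unfolding block_core_def by (simp only: y_op_pow_add y_op_pow_scale)
  finally show ?thesis by (simp add: ab \<phi>_def)
qed

end

definition lhs_weight :: "(nat \<Rightarrow> nat) \<Rightarrow> (nat \<Rightarrow> nat) \<Rightarrow> nat \<Rightarrow> real \<Rightarrow> real \<Rightarrow> nat \<Rightarrow> nat \<Rightarrow> nat \<Rightarrow> real" where
  "lhs_weight a b s q \<theta> i d e = block_weight q (- \<theta>) d e
     * (if i = 1 \<and> \<not> d < a 1 then 0 else 1) * (if i = s \<and> \<not> e < b s then 0 else 1)"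

definition lhs_block :: "(nat \<Rightarrow> nat) \<Rightarrow> (nat \<Rightarrow> nat) \<Rightarrow> nat \<Rightarrow> nat \<Rightarrow> nat \<Rightarrow> letter list" where
  "lhs_block a b i d e = replicate (a i - d) LX @ replicate (b i - e) LY"

text \<open>The right-hand word is cut into the blocks y^(b_(i-1) - epsilon_i) x^(a_i - delta_i),
  i = 1, ..., s + 1, whose y-part is empty for i = 1 and whose x-part is empty for i = s + 1.\<close>
definition rhs_weight :: "(nat \<Rightarrow> nat) \<Rightarrow> (nat \<Rightarrow> nat) \<Rightarrow> nat \<Rightarrow> real \<Rightarrow> real \<Rightarrow> nat \<Rightarrow> nat \<Rightarrow> nat \<Rightarrow> real" where
  "rhs_weight a b s q t i d e = block_weight q (- t) d e
     * (if i = s + 1 \<and> d \<noteq> 0 then 0 else 1) * (if i = 1 \<and> e \<noteq> 0 then 0 else 1)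
     * (if i = 1 \<and> \<not> d < a 1 then 0 else 1) * (if i = s + 1 \<and> \<not> e < b s then 0 else 1)"

definition rhs_block :: "(nat \<Rightarrow> nat) \<Rightarrow> (nat \<Rightarrow> nat) \<Rightarrow> nat \<Rightarrow> nat \<Rightarrow> nat \<Rightarrow> nat \<Rightarrow> letter list" where
  "rhs_block a b s i d e =
     replicate (if 2 \<le> i then b (i - 1) - e else 0) LY @ replicate (if i \<le> s then a i - d else 0) LX"

context q_param
begin

lemma lhs_block_op:
  assumes bound: "y_den_bound q \<theta> k" and "1 \<le> a i" "1 \<le> b i"
    and a1: "i = 1 \<Longrightarrow> 2 \<le> a 1"
    and at_0: "(i = s \<and> b s = 1) \<or> (y_op q \<theta> ^^ (b i - 1)) \<psi> 0 = 0"
  shows "block_op q \<theta> (lhs_weight a b s q \<theta>) (lhs_block a b) i \<psi> m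
       = x_coeff q m ^ (a i - 1) * (if i = s then link_op_last q (q * \<theta> - 1) (b s) \<psi> m
                                   else link_op q (q * \<theta> - 1) (b i) \<psi> m)"
proof -
  have first: "(if i = 1 \<and> \<not> d < a 1 then 0 else 1) = (1::real)" if "d \<le> 1" for d
    using a1 that by auto
  show ?thesis
  proof (cases "i = s \<and> b s = 1")
    case True
    then have "lhs_weight a b s q \<theta> i d 0 = block_weight q (- \<theta>) d 0" "lhs_weight a b s q \<theta> i d 1 = 0"
      if "d \<le> 1" for d
      using first[OF that] by (auto simp: lhs_weight_def)
    then have "block_op q \<theta> (lhs_weight a b s q \<theta>) (lhs_block a b) i \<psi> m
        = (\<Sum>d\<in>{0,1::nat}. block_weight q (- \<theta>) d 0 * word_op q \<theta> (replicate (a i - d) LX @ replicate 1 LY) \<psi> m)"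
      using True by (simp add: block_op_def lhs_block_def)
    also have "\<dots> = x_coeff q m ^ (a i - 1) * (inv_qint q m * sum_below \<psi> m)"
      by (rule theta_block_sum_last[OF bound \<open>1 \<le> a i\<close>])
    finally show ?thesis using True by (simp add: link_op_last_def)
  next
    case False
    then have "lhs_weight a b s q \<theta> i d e = block_weight q (- \<theta>) d e" if "d \<le> 1" "e \<le> 1" for d e
      using first[OF that(1)] that(2) \<open>1 \<le> b i\<close> by (auto simp: lhs_weight_def)
    then have "block_op q \<theta> (lhs_weight a b s q \<theta>) (lhs_block a b) i \<psi> m
        = (\<Sum>d\<in>{0,1::nat}. \<Sum>e\<in>{0,1::nat}. block_weight q (- \<theta>) d e *
            word_op q \<theta> (replicate (a i - d) LX @ replicate (b i - e) LY) \<psi> m)"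
      by (simp add: block_op_def lhs_block_def)
    also have "\<dots> = x_coeff q m ^ (a i - 1) * link_op q (q * \<theta> - 1) (b i) \<psi> m"
      using False at_0 by (intro theta_block_sum[OF bound \<open>1 \<le> a i\<close> \<open>1 \<le> b i\<close>]) auto
    finally show ?thesis using False \<open>1 \<le> b i\<close> by (auto simp: link_op_last_def)
  qed
qed

lemma lhs_block_op_first_a1:
  assumes "a 1 = 1" "1 \<le> b 1" "s = 1 \<Longrightarrow> 2 \<le> b 1"
  shows "block_op q \<theta> (lhs_weight a b s q \<theta>) (lhs_block a b) 1 \<psi> m
       = x_coeff q m * (- \<theta> * y_op q \<theta> ((y_op q \<theta> ^^ (b 1 - 1)) \<psi>) m + (y_op q \<theta> ^^ (b 1 - 1)) \<psi> m)"
proof -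
  obtain b' where "b 1 = Suc b'" using assms(2) by (cases "b 1") auto
  then show ?thesis
    using assms unfolding block_op_def sum_01_01
    by (auto simp: lhs_weight_def lhs_block_def word_op_xy_block algebra_simps)
qed

lemma rhs_block_op_first:
  assumes "1 \<le> s" "1 \<le> a 1"
  shows "block_op q t (rhs_weight a b s q t) (rhs_block a b s) 1 \<psi> m
       = (if 2 \<le> a 1 then y_normalizer q t m * (x_coeff q m ^ (a 1 - 1) * \<psi> m)
          else - t * (x_coeff q m * \<psi> m))"
proof -
  obtain a' where "a 1 = Suc a'" using assms(2) by (cases "a 1") auto
  then show ?thesis
    using assms unfolding block_op_def sum_01_01
    by (cases a') (auto simp: rhs_weight_def rhs_block_def word_op_replicate_LX y_normalizer_def algebra_simps)
qed

lemma rhs_block_op_mid: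
  assumes bound: "y_den_bound q t k" and i: "2 \<le> i" "i \<le> s" and "1 \<le> a i" "1 \<le> b (i - 1)"
    and at_0: "x_coeff q 0 ^ (a i - 1) * \<psi> 0 = 0"
  shows "y_normalizer q t m * block_op q t (rhs_weight a b s q t) (rhs_block a b s) i \<psi> m
       = link_op q t (b (i - 1)) (\<lambda>p. y_normalizer q t p * (x_coeff q p ^ (a i - 1) * \<psi> p)) m"
proof -
  have "block_op q t (rhs_weight a b s q t) (rhs_block a b s) i \<psi> m
      = (\<Sum>d\<in>{0,1::nat}. \<Sum>e\<in>{0,1::nat}. block_weight q (- t) d e *
            (y_op q t ^^ (b (i - 1) - e)) (\<lambda>p. x_coeff q p ^ (a i - d) * \<psi> p) m)"
    using i by (simp add: block_op_def rhs_weight_def rhs_block_def word_op_yx_block)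
  also have "\<dots> = (y_op q t ^^ (b (i - 1) - 1)) (block_core q t (\<lambda>p. x_coeff q p ^ (a i - 1) * \<psi> p)) m"
    by (rule theta'_block_sum) fact+
  finally show ?thesis
    using y_normalizer_y_op_pow_block_core[OF bound, of "\<lambda>p. x_coeff q p ^ (a i - 1) * \<psi> p"] at_0
    by (simp add: link_op_def)
qed

lemma rhs_block_op_last:
  assumes bound: "y_den_bound q t k" and "t \<noteq> 0" "1 \<le> s" "1 \<le> b s"
  shows "y_normalizer q t m * block_op q t (rhs_weight a b s q t) (rhs_block a b s) (Suc s) delta0 m
       = - t * link_op_last q t (b s) delta0 m"
proof -
  have block: "block_op q t (rhs_weight a b s q t) (rhs_block a b s) (Suc s) delta0 m
      = - t * (y_op q t ^^ b s) delta0 m + (if 1 < b s then 1 else 0) * (y_op q t ^^ (b s - 1)) delta0 m"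
    using assms(3,4) by (simp add: block_op_def sum_01_01 rhs_weight_def rhs_block_def)
  show ?thesis
  proof (cases "b s = 1")
    case True
    then show ?thesis
      using block y_normalizer_y_op_pow[OF bound, of 1 m delta0] by (simp add: link_op_last_def)
  next
    case False
    then obtain b' where b': "b s = Suc (Suc b')" using assms(4) by (cases "b s") (auto simp: gr0_conv_Suc)
    define h where "h p = - t * y_op q t delta0 p + delta0 p" for p
    have "(y_op q t ^^ Suc b') h m = - t * (y_op q t ^^ Suc b') (y_op q t delta0) m + (y_op q t ^^ Suc b') delta0 m"
      unfolding h_def by (simp only: y_op_pow_add y_op_pow_scale)
    then have "block_op q t (rhs_weight a b s q t) (rhs_block a b s) (Suc s) delta0 m = (y_op q t ^^ Suc b') h m"
      unfolding block b' by (simp add: funpow_Suc_apply del: funpow.simps)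
    moreover have "sum_below h = (\<lambda>m. - t * y_sum q t (sum_upto delta0) m)"
    proof
      fix m
      have "h p = - t * (y_coeff q t p * sum_upto delta0 p)" for p
        using \<open>t \<noteq> 0\<close> by (cases "p = 0") (simp_all add: h_def y_op_def delta0_def y_coeff_0 sum_below_def)
      then show "sum_below h m = - t * y_sum q t (sum_upto delta0) m"
        by (simp add: sum_below_def y_sum_def sum_distrib_left)
    qed
    ultimately have "y_normalizer q t m * block_op q t (rhs_weight a b s q t) (rhs_block a b s) (Suc s) delta0 m
        = inv_qint q m * (y_sum q t ^^ b') (\<lambda>m. - t * y_sum q t (sum_upto delta0) m) m"
      using y_normalizer_y_op_pow[OF bound, of "Suc b'" m h] by simp
    also have "\<dots> = - t * (inv_qint q m * (y_sum q t ^^ Suc b') (sum_upto delta0) m)"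
      by (simp only: y_sum_pow_scale funpow_Suc_apply mult.left_commute)
    finally show ?thesis using b' by (simp add: link_op_last_def link_op_def)
  qed
qed

end

section \<open>Polynomially bounded sequences\<close>

definition poly_bounded :: "(nat \<Rightarrow> real) \<Rightarrow> bool" where
  "poly_bounded f \<longleftrightarrow> (\<exists>C k. \<forall>m. \<bar>f m\<bar> \<le> C * (real m + 1) ^ k)"

lemma poly_boundedI: "(\<And>m. \<bar>f m\<bar> \<le> C * (real m + 1) ^ k) \<Longrightarrow> poly_bounded f"
  unfolding poly_bounded_def by blast

lemma poly_boundedD:
  assumes "poly_bounded f"
  shows "\<exists>C k. 0 \<le> C \<and> (\<forall>m. \<bar>f m\<bar> \<le> C * (real m + 1) ^ k)"
proof -
  obtain C k where bound: "\<And>m. \<bar>f m\<bar> \<le> C * (real m + 1) ^ k"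
    using assms unfolding poly_bounded_def by blast
  moreover have "0 \<le> C" using bound[of 0] abs_ge_zero[of "f 0"] by simp
  ultimately show ?thesis by blast
qed

lemma poly_bounded_delta0: "poly_bounded delta0"
  by (rule poly_boundedI[where C = 1 and k = 0]) (simp add: delta0_def)

lemma poly_bounded_add:
  assumes "poly_bounded f" "poly_bounded g"
  shows "poly_bounded (\<lambda>m. f m + g m)"
proof -
  obtain C k where C: "0 \<le> C" "\<And>m. \<bar>f m\<bar> \<le> C * (real m + 1) ^ k" using poly_boundedD[OF assms(1)] by blast
  obtain D l where D: "0 \<le> D" "\<And>m. \<bar>g m\<bar> \<le> D * (real m + 1) ^ l" using poly_boundedD[OF assms(2)] by blast
  show ?thesis
  proof (rule poly_boundedI[where C = "C + D" and k = "max k l"])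
    fix m
    have "C * (real m + 1) ^ k \<le> C * (real m + 1) ^ max k l" "D * (real m + 1) ^ l \<le> D * (real m + 1) ^ max k l"
      using C(1) D(1) by (intro mult_left_mono power_increasing; simp)+
    then show "\<bar>f m + g m\<bar> \<le> (C + D) * (real m + 1) ^ max k l"
      using C(2)[of m] D(2)[of m] abs_triangle_ineq[of "f m" "g m"] by (simp add: algebra_simps)
  qed
qed

lemma poly_bounded_scale: "poly_bounded f \<Longrightarrow> poly_bounded (\<lambda>m. c * f m)"
  unfolding poly_bounded_def
  by (metis (no_types, opaque_lifting) abs_ge_zero abs_mult mult.assoc mult_left_mono)

lemma poly_bounded_sum:
  "finite I \<Longrightarrow> (\<And>i. i \<in> I \<Longrightarrow> poly_bounded (F i)) \<Longrightarrow> poly_bounded (\<lambda>m. \<Sum>i\<in>I. F i m)"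
  by (induction I rule: finite_induct) (auto intro: poly_boundedI[where C = 0 and k = 0] poly_bounded_add)

lemma poly_bounded_sum_upto:
  assumes "poly_bounded f"
  shows "poly_bounded (sum_upto f)"
proof -
  obtain C k where C: "0 \<le> C" "\<And>m. \<bar>f m\<bar> \<le> C * (real m + 1) ^ k" using poly_boundedD[OF assms] by blast
  show ?thesis
  proof (rule poly_boundedI[where C = C and k = "Suc k"])
    fix m
    have "\<bar>sum_upto f m\<bar> \<le> (\<Sum>p\<le>m. \<bar>f p\<bar>)" unfolding sum_upto_def by (rule sum_abs)
    also have "\<dots> \<le> (\<Sum>p\<le>m. C * (real m + 1) ^ k)"
      using C by (intro sum_mono order_trans[OF C(2)] mult_left_mono power_mono) auto
    also have "\<dots> = C * (real m + 1) ^ Suc k" by (simp add: algebra_simps)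
    finally show "\<bar>sum_upto f m\<bar> \<le> C * (real m + 1) ^ Suc k" .
  qed
qed

context q_param
begin

lemma poly_bounded_x_coeff_mult: "poly_bounded f \<Longrightarrow> poly_bounded (\<lambda>m. x_coeff q m * f m)"
  unfolding poly_bounded_def
  by (metis abs_mult abs_x_coeff_le_1 abs_ge_zero mult_left_le_one_le order_trans)

lemma poly_bounded_y_op:
  assumes bound: "y_den_bound q \<theta> k" and f: "poly_bounded f"
  shows "poly_bounded (y_op q \<theta> f)"
proof -
  have "poly_bounded (\<lambda>p. \<bar>f p\<bar>)" using f by (simp add: poly_bounded_def)
  then obtain C n where C: "0 \<le> C" "\<And>m. \<bar>sum_upto (\<lambda>p. \<bar>f p\<bar>) m\<bar> \<le> C * (real m + 1) ^ n"
    using poly_boundedD[OF poly_bounded_sum_upto] by blast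
  have k: "0 < k" using bound by (simp add: y_den_bound_def)
  show ?thesis
  proof (rule poly_boundedI[where C = "C / k" and k = n])
    fix m
    show "\<bar>y_op q \<theta> f m\<bar> \<le> C / k * (real m + 1) ^ n"
    proof (cases "m = 0")
      case False
      then have "0 \<le> y_coeff q \<theta> m" "y_coeff q \<theta> m \<le> 1 / k"
        using y_coeff_pos[OF bound] y_coeff_le[OF bound] by (auto intro: less_imp_le)
      moreover have "\<bar>sum_below f m\<bar> \<le> C * (real m + 1) ^ n"
      proof -
        have "\<bar>sum_below f m\<bar> \<le> (\<Sum>p<m. \<bar>f p\<bar>)" unfolding sum_below_def by (rule sum_abs)
        also have "\<dots> \<le> sum_upto (\<lambda>p. \<bar>f p\<bar>) m" unfolding sum_upto_def by (intro sum_mono2) auto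
        finally show ?thesis using C(2)[of m] by simp
      qed
      ultimately have "\<bar>y_op q \<theta> f m\<bar> \<le> 1 / k * (C * (real m + 1) ^ n)"
        unfolding y_op_def abs_mult using k by (intro mult_mono) auto
      then show ?thesis by simp
    qed (use C k in simp)
  qed
qed

lemma poly_bounded_y_op_pow: "y_den_bound q \<theta> k \<Longrightarrow> poly_bounded f \<Longrightarrow> poly_bounded ((y_op q \<theta> ^^ j) f)"
  by (induction j) (auto intro: poly_bounded_y_op)

lemma poly_bounded_word_op: "y_den_bound q \<theta> k \<Longrightarrow> poly_bounded f \<Longrightarrow> poly_bounded (word_op q \<theta> w f)"
proof (induction w)
  case (Cons l w)
  then show ?case
    by (cases l) (auto simp: word_op_Cons_LY intro: poly_bounded_x_coeff_mult poly_bounded_y_op)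
qed simp

lemma poly_bounded_block_tail:
  assumes bound: "y_den_bound q \<theta> k"
  shows "poly_bounded (block_tail q \<theta> W B n j)"
proof (induction j)
  case (Suc j)
  have "block_tail q \<theta> W B n (Suc j)
      = (\<lambda>m. \<Sum>d\<in>{0,1::nat}. \<Sum>e\<in>{0,1::nat}. W (n - j) d e * word_op q \<theta> (B (n - j) d e) (block_tail q \<theta> W B n j) m)"
    by (auto simp: block_op_def simp del: insert_iff)
  then show ?case
    by (simp only:) (intro poly_bounded_sum poly_bounded_scale poly_bounded_word_op[OF bound Suc] finite.intros)
qed (simp add: poly_bounded_delta0)

lemma poly_bounded_mult_power_tendsto_0:
  assumes "poly_bounded f"
  shows "(\<lambda>N. q ^ N * f N) \<longlonglongrightarrow> 0"
proof -
  obtain C k where C: "0 \<le> C" "\<And>m. \<bar>f m\<bar> \<le> C * (real m + 1) ^ k" using poly_boundedD[OF assms] by blast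
  have lim: "(\<lambda>N. C * ((real N + 1) ^ k * q ^ N)) \<longlonglongrightarrow> 0"
    using q_pos q_less_1 by real_asymp
  have "norm (q ^ N * f N) \<le> C * ((real N + 1) ^ k * q ^ N)" for N
    using C(2)[of N] q_pos by (simp add: abs_mult mult_left_mono mult_ac)
  then show ?thesis
    by (intro Lim_null_comparison[OF always_eventually lim]) auto
qed

lemma summable_x_coeff_mult:
  assumes "poly_bounded f"
  shows "summable (\<lambda>m. x_coeff q m * f m)"
proof -
  obtain C k where C: "0 \<le> C" "\<And>m. \<bar>f m\<bar> \<le> C * (real m + 1) ^ k" using poly_boundedD[OF assms] by blast
  define r where "r = sqrt q"
  have r: "0 < r" "r < 1" and q_eq: "q ^ n = r ^ n * r ^ n" for n
    using q_pos q_less_1 by (auto simp: r_def power_mult_distrib[symmetric])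
  have "(\<lambda>n. (real n + 1) ^ k * r ^ n) \<longlonglongrightarrow> 0" using r by real_asymp
  then have "\<forall>\<^sub>F n in sequentially. (real n + 1) ^ k * r ^ n < 1"
    by (rule order_tendstoD) simp
  then have "\<forall>\<^sub>F n in sequentially. norm (x_coeff q n * f n) \<le> C * r ^ n"
  proof eventually_elim
    case (elim n)
    have "norm (x_coeff q n * f n) \<le> q ^ n * (C * (real n + 1) ^ k)"
      using x_coeff_nonneg[of n] x_coeff_le_power[of n] C(2)[of n] by (simp add: abs_mult mult_mono)
    also have "\<dots> = C * r ^ n * ((real n + 1) ^ k * r ^ n)" by (simp add: q_eq mult_ac)
    also have "\<dots> \<le> C * r ^ n" using elim C(1) r by (simp add: mult_left_le)
    finally show ?case .
  qed
  moreover have "summable (\<lambda>n. C * r ^ n)" using r by simp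
  ultimately show ?thesis by (rule summable_comparison_test_ev)
qed

lemma y_coeff_sub_mult_tendsto_0:
  assumes bound: "y_den_bound q t k" and \<phi>: "poly_bounded \<phi>"
  shows "(\<lambda>N. (y_coeff q t N - (1 - q)) * \<phi> N) \<longlonglongrightarrow> 0"
proof -
  have k: "0 < k" using bound by (simp add: y_den_bound_def)
  have eq: "y_coeff q t N - (1 - q) = (1 + (1 - q) * t) * y_coeff q t N * q ^ N" if "1 \<le> N" for N
  proof -
    have "qint q N - t * q ^ N \<noteq> 0" using bound that unfolding y_den_bound_def by force
    moreover have "(1 - q) * qint q N = 1 - q ^ N" using q_neq_1 by (simp add: qint_def)
    ultimately show ?thesis unfolding y_coeff_def by (simp add: field_simps)
  qed
  define c where "c = \<bar>1 + (1 - q) * t\<bar> / k"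
  have lim: "(\<lambda>N. c * \<bar>q ^ N * \<phi> N\<bar>) \<longlonglongrightarrow> 0"
    by (intro tendsto_mult_right_zero tendsto_rabs_zero poly_bounded_mult_power_tendsto_0 \<phi>)
  have "norm ((y_coeff q t N - (1 - q)) * \<phi> N) \<le> c * \<bar>q ^ N * \<phi> N\<bar>" if "1 \<le> N" for N
  proof -
    have "0 \<le> y_coeff q t N" "y_coeff q t N \<le> 1 / k"
      using y_coeff_pos[OF bound that] y_coeff_le[OF bound that] by auto
    then have "\<bar>1 + (1 - q) * t\<bar> * y_coeff q t N * \<bar>q ^ N * \<phi> N\<bar> \<le> \<bar>1 + (1 - q) * t\<bar> * (1 / k) * \<bar>q ^ N * \<phi> N\<bar>"
      by (intro mult_right_mono mult_left_mono) auto
    then show ?thesis using \<open>0 \<le> y_coeff q t N\<close> by (simp add: eq[OF that] abs_mult c_def mult_ac)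
  qed
  then show ?thesis
    by (rule Lim_null_comparison[OF eventually_sequentiallyI[of 1] lim])
qed

end

lemma telescoping_identity:
  fixes X A B Z S f \<theta> \<theta>' :: real
  assumes "(1 - \<theta> * X) * A = Z" "(1 - \<theta>' * X) * B = Z" "Z = X + (1 - q)"
  shows "X * (- \<theta> * (A * S) + f) - X * (- \<theta>' * B * (S + f)) = B * (S + f) - A * S - (1 - q) * f"
proof -
  have "X * (- \<theta> * (A * S) + f) - X * (- \<theta>' * B * (S + f)) - (B * (S + f) - A * S - (1 - q) * f)
      = S * ((1 - \<theta> * X) * A - Z) - (S + f) * ((1 - \<theta>' * X) * B - Z) - f * (Z - (X + (1 - q)))"
    by (simp add: algebra_simps)
  then show ?thesis using assms by simp
qed

lemma telescoping_step:
  fixes c c' r S f :: real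
  shows "(c - r) * S + (c' * (S + f) - c * S - r * f) = (c' - r) * (S + f)"
  by (simp add: algebra_simps)

section \<open>Matching the two block decompositions\<close>

locale dual_setting = q_param +
  fixes a b :: "nat \<Rightarrow> nat" and s :: nat and \<theta> :: real
  assumes s_pos: "1 \<le> s"
    and a_pos: "\<And>i. 1 \<le> i \<Longrightarrow> i \<le> s \<Longrightarrow> 1 \<le> a i"
    and b_pos: "\<And>i. 1 \<le> i \<Longrightarrow> i \<le> s \<Longrightarrow> 1 \<le> b i"
    and abs_theta: "\<bar>\<theta>\<bar> < 1 / q"
begin

abbreviation \<theta>' :: real where
  "\<theta>' \<equiv> q * \<theta> - 1"

abbreviation L :: "nat \<Rightarrow> nat \<Rightarrow> real" where
  "L \<equiv> block_tail q \<theta> (lhs_weight a b s q \<theta>) (lhs_block a b) s"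

abbreviation R :: "nat \<Rightarrow> nat \<Rightarrow> real" where
  "R \<equiv> block_tail q \<theta>' (rhs_weight a b s q \<theta>') (rhs_block a b s) (Suc s)"

definition link_step :: "nat \<Rightarrow> (nat \<Rightarrow> real) \<Rightarrow> nat \<Rightarrow> real" where
  "link_step j = (if j = 0 then link_op_last q \<theta>' (b s) else link_op q \<theta>' (b (s - j)))"

lemma link_step_at_0 [simp]: "link_step j f 0 = 0"
  by (simp add: link_step_def)

lemma bound_theta: "y_den_bound q \<theta> (1 - \<bar>\<theta>\<bar> * q)"
  by (rule y_den_bound_of_abs_less[OF abs_theta])

lemma theta'_neg: "\<theta>' < 0"
  using abs_theta q_pos by (simp add: field_simps abs_less_iff)

lemma bound_theta': "y_den_bound q \<theta>' 1"
  using theta'_neg by (intro y_den_bound_of_nonpos) simp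

lemma y_normalizer_theta'_pos: "0 < y_normalizer q \<theta>' m"
  using theta'_neg x_coeff_nonneg[of m] unfolding y_normalizer_def
  by (smt (verit) mult_nonpos_nonneg)

lemma L_Suc:
  assumes "j < s" "s - j = 1 \<Longrightarrow> 2 \<le> a 1" "1 \<le> j \<Longrightarrow> L j 0 = 0"
  shows "L (Suc j) p = x_coeff q p ^ (a (s - j) - 1) * link_step j (L j) p"
proof -
  have "(s - j = s \<and> b s = 1) \<or> (y_op q \<theta> ^^ (b (s - j) - 1)) (L j) 0 = 0"
    using assms(3) b_pos[OF s_pos order_refl] by (cases "j = 0") (auto simp: delta0_def)
  then have "block_op q \<theta> (lhs_weight a b s q \<theta>) (lhs_block a b) (s - j) (L j) p
      = x_coeff q p ^ (a (s - j) - 1) * (if s - j = s then link_op_last q \<theta>' (b s) (L j) p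
                                       else link_op q \<theta>' (b (s - j)) (L j) p)"
    using assms(1,2) a_pos b_pos by (intro lhs_block_op[OF bound_theta]) auto
  moreover have "s - j = s \<longleftrightarrow> j = 0" using assms(1) by auto
  ultimately show ?thesis by (simp add: link_step_def)
qed

lemma L_at_0: "1 \<le> j \<Longrightarrow> j < s \<Longrightarrow> L j 0 = 0"
proof (induction j)
  case (Suc j)
  then show ?case using L_Suc[of j 0] by (cases "j = 0") auto
qed simp

lemma R_intertwines_L: "j < s \<Longrightarrow> y_normalizer q \<theta>' m * R (Suc j) m = - \<theta>' * link_step j (L j) m"
proof (induction j arbitrary: m)
  case 0
  show ?case
    using rhs_block_op_last[where a = a and b = b and s = s, OF bound_theta' _ s_pos b_pos[OF s_pos order_refl]]
      theta'_neg
    by (simp add: link_step_def)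
next
  case (Suc j)
  define i where "i = s - j"
  have i: "2 \<le> i" "i \<le> s" using Suc.prems by (auto simp: i_def)
  have R_at_0: "R (Suc j) 0 = 0" using Suc.IH[of 0] Suc.prems by simp
  have "y_normalizer q \<theta>' p * (x_coeff q p ^ (a i - 1) * R (Suc j) p) = - \<theta>' * L (Suc j) p" for p
    using Suc.IH[of p] Suc.prems L_Suc[of j p] L_at_0[of j] by (simp add: i_def mult_ac)
  moreover have "y_normalizer q \<theta>' m * R (Suc (Suc j)) m
      = link_op q \<theta>' (b (i - 1)) (\<lambda>p. y_normalizer q \<theta>' p * (x_coeff q p ^ (a i - 1) * R (Suc j) p)) m"
    unfolding i_def using i a_pos b_pos R_at_0
    by (simp add: rhs_block_op_mid[OF bound_theta'] i_def)
  ultimately show ?case using Suc.prems by (simp add: link_op_scale link_step_def i_def)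
qed

lemma R_eq_L_if_a1_ge_2:
  assumes a1: "2 \<le> a 1"
  shows "R (Suc s) m = - \<theta>' * L s m"
proof -
  obtain s' where s': "s = Suc s'" using s_pos by (cases s) auto
  have "R (Suc s) m = y_normalizer q \<theta>' m * (x_coeff q m ^ (a 1 - 1) * R s m)"
    using rhs_block_op_first[where a = a and b = b, OF s_pos a_pos[OF order_refl s_pos]] a1 by (simp add: s')
  also have "\<dots> = x_coeff q m ^ (a 1 - 1) * (- \<theta>' * link_step s' (L s') m)"
    using R_intertwines_L[of s' m] s' by (simp add: mult_ac)
  also have "\<dots> = - \<theta>' * L s m"
    using L_Suc[of s' m] L_at_0[of s'] a1 s' by (simp add: mult_ac)
  finally show ?thesis .
qed

lemma R_Suc_s_eq: "a 1 = 1 \<Longrightarrow> R (Suc s) m = - \<theta>' * (x_coeff q m * R s m)"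
  using rhs_block_op_first[where a = a and b = b, OF s_pos] by (simp add: algebra_simps)

text \<open>When a_1 = 1 the two series agree only after summation: their difference telescopes.\<close>

context
  assumes a1: "a 1 = 1" and b1: "s = 1 \<Longrightarrow> 2 \<le> b 1"
begin

abbreviation \<phi> :: "nat \<Rightarrow> real" where
  "\<phi> \<equiv> (y_op q \<theta> ^^ (b 1 - 1)) (L (s - 1))"

lemma phi_at_0: "\<phi> 0 = 0"
proof (cases "b 1 = 1")
  case True
  then have "2 \<le> s" using b1 s_pos by fastforce
  then show ?thesis using L_at_0[of "s - 1"] True by simp
qed (use b_pos[of 1] s_pos in simp)

lemma L_s_eq: "L s m = x_coeff q m * (- \<theta> * y_op q \<theta> \<phi> m + \<phi> m)"
proof -
  obtain s' where s': "s = Suc s'" using s_pos by (cases s) auto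
  then show ?thesis
    using lhs_block_op_first_a1[where a = a and b = b and s = s, OF a1 b_pos[OF order_refl s_pos] b1] by simp
qed

lemma R_s_eq:
  assumes "1 \<le> m"
  shows "R s m = - \<theta>' * y_coeff q \<theta>' m * sum_upto \<phi> m"
proof -
  have "link_step (s - 1) (L (s - 1)) m = inv_qint q m * sum_upto \<phi> m"
    using b1 s_pos by (auto simp: link_step_def link_op_last_def link_op_def sum_upto_y_op_pow)
  then have "y_normalizer q \<theta>' m * R s m = y_normalizer q \<theta>' m * (- \<theta>' * y_coeff q \<theta>' m * sum_upto \<phi> m)"
    using R_intertwines_L[of "s - 1" m] s_pos y_normalizer_mult_y_coeff[OF bound_theta' assms]
    by (simp add: mult_ac)
  then show ?thesis using y_normalizer_theta'_pos[of m] by simp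
qed

lemma L_minus_x_coeff_mult_R:
  assumes m: "1 \<le> m"
  shows "L s m - x_coeff q m * R s m
    = y_coeff q \<theta>' m * sum_upto \<phi> m - y_coeff q \<theta> m * sum_below \<phi> m - (1 - q) * \<phi> m"
proof -
  have "L s m - x_coeff q m * R s m
      = x_coeff q m * (- \<theta> * (y_coeff q \<theta> m * sum_below \<phi> m) + \<phi> m)
        - x_coeff q m * (- \<theta>' * y_coeff q \<theta>' m * (sum_below \<phi> m + \<phi> m))"
    unfolding L_s_eq R_s_eq[OF m] y_op_def sum_upto_eq_sum_below ..
  also have "\<dots> = y_coeff q \<theta>' m * (sum_below \<phi> m + \<phi> m) - y_coeff q \<theta> m * sum_below \<phi> m - (1 - q) * \<phi> m"
    using y_normalizer_mult_y_coeff[OF bound_theta m] y_normalizer_mult_y_coeff[OF bound_theta' m] inv_qint_eq[OF m]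
    unfolding y_normalizer_def by (rule telescoping_identity)
  finally show ?thesis by (simp only: sum_upto_eq_sum_below)
qed

lemma sum_L_minus_x_coeff_mult_R:
  "(\<Sum>m<Suc N. L s m - x_coeff q m * R s m) = (y_coeff q \<theta>' N - (1 - q)) * sum_upto \<phi> N"
proof (induction N)
  case 0
  then show ?case using phi_at_0 by (simp add: L_s_eq sum_upto_def)
next
  case (Suc N)
  have "1 \<le> Suc N" by simp
  have "(\<Sum>m<Suc (Suc N). L s m - x_coeff q m * R s m)
      = (y_coeff q \<theta>' N - (1 - q)) * sum_upto \<phi> N
        + (y_coeff q \<theta>' (Suc N) * (sum_upto \<phi> N + \<phi> (Suc N)) - y_coeff q \<theta>' N * sum_upto \<phi> N
           - (1 - q) * \<phi> (Suc N))"
    unfolding sum.lessThan_Suc[of _ "Suc N"] Suc L_minus_x_coeff_mult_R[OF \<open>1 \<le> Suc N\<close>]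
      sum_upto_Suc sum_below_Suc y_coeff_shift ..
  also have "\<dots> = (y_coeff q \<theta>' (Suc N) - (1 - q)) * (sum_upto \<phi> N + \<phi> (Suc N))"
    by (rule telescoping_step)
  finally show ?case by (simp only: sum_upto_Suc)
qed

end

lemma sums_L_sums_R_eq:
  assumes b1: "a 1 = 1 \<Longrightarrow> s = 1 \<Longrightarrow> 2 \<le> b 1"
    and V: "(\<lambda>m. L s m) sums V" and W: "(\<lambda>m. R (Suc s) m) sums W"
  shows "V = W / - \<theta>'"
proof (cases "2 \<le> a 1")
  case True
  have "(\<lambda>m. R (Suc s) m) sums (- \<theta>' * V)"
    using sums_mult[OF V, of "- \<theta>'"] R_eq_L_if_a1_ge_2[OF True] by simp
  then have "W = - \<theta>' * V" using W by (rule sums_unique2[symmetric])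
  then show ?thesis using theta'_neg by simp
next
  case False
  then have a1: "a 1 = 1" using a_pos[of 1] s_pos by auto
  have eq: "(\<lambda>m. R (Suc s) m / - \<theta>') = (\<lambda>m. x_coeff q m * R s m)"
    unfolding R_Suc_s_eq[OF a1] using theta'_neg by simp
  have "(\<lambda>m. x_coeff q m * R s m) sums (W / - \<theta>')"
    using sums_divide[OF W, of "- \<theta>'"] unfolding eq .
  then have "(\<lambda>N. \<Sum>m<N. L s m - x_coeff q m * R s m) \<longlonglongrightarrow> V - W / - \<theta>'"
    using sums_diff[OF V] by (simp add: sums_def)
  then have "(\<lambda>N. \<Sum>m<Suc N. L s m - x_coeff q m * R s m) \<longlonglongrightarrow> V - W / - \<theta>'"
    by (rule LIMSEQ_Suc)
  moreover have "(\<lambda>N. (y_coeff q \<theta>' N - (1 - q)) * sum_upto ((y_op q \<theta> ^^ (b 1 - 1)) (L (s - 1))) N) \<longlonglongrightarrow> 0"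
    by (intro y_coeff_sub_mult_tendsto_0[OF bound_theta'] poly_bounded_sum_upto
        poly_bounded_y_op_pow[OF bound_theta] poly_bounded_block_tail[OF bound_theta])
  then have "(\<lambda>N. \<Sum>m<Suc N. L s m - x_coeff q m * R s m) \<longlonglongrightarrow> 0"
    by (simp only: sum_L_minus_x_coeff_mult_R[OF a1 b1[OF a1]])
  ultimately have "V - W / - \<theta>' = 0" by (rule LIMSEQ_unique)
  then show ?thesis by linarith
qed

end

section \<open>The two sides as series\<close>

lemma xy_word_Suc:
  "xy_word (Suc n) u v = xy_word n u v @ replicate (u (Suc n)) LX @ replicate (v (Suc n)) LY"
  by (simp add: xy_word_def)

lemma xy_word_starts_LX:
  assumes "1 \<le> s" "1 \<le> u 1"
  shows "\<exists>w. xy_word s u v = LX # w"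
proof -
  have "[1..<s+1] = 1 # [Suc 1..<s+1]" using assms(1) by (intro upt_conv_Cons) simp
  moreover obtain k where "u 1 = Suc k" using assms(2) by (cases "u 1") auto
  ultimately show ?thesis by (simp add: xy_word_def)
qed

lemma xy_word_ends_LY:
  assumes "1 \<le> s" "1 \<le> v s"
  shows "last (xy_word s u v) = LY"
proof -
  obtain s' where s': "s = Suc s'" using assms(1) by (cases s) auto
  obtain k where "v s = Suc k" using assms(2) by (cases "v s") auto
  then show ?thesis by (simp add: s' xy_word_Suc replicate_append_same[symmetric] del: replicate_Suc)
qed

lemma xy_word_eq_concat_lhs_block:
  "xy_word s (\<lambda>i. a i - \<delta> i) (\<lambda>i. b i - \<epsilon> i) = concat (map (\<lambda>i. lhs_block a b i (\<delta> i) (\<epsilon> i)) [1..<s+1])"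
  by (simp add: xy_word_def lhs_block_def)

lemma concat_rhs_block_prefix:
  "n \<le> s \<Longrightarrow> concat (map (\<lambda>i. rhs_block a b s i (\<delta> i) (\<epsilon> i)) [1..<n+2])
     = xy_word n (\<lambda>i. a i - \<delta> i) (\<lambda>i. b i - \<epsilon> (i + 1))
       @ replicate (if n + 1 \<le> s then a (n + 1) - \<delta> (n + 1) else 0) LX"
proof (induction n)
  case 0
  then show ?case by (simp add: rhs_block_def xy_word_def)
next
  case (Suc n)
  have "[1..<Suc n + 2] = [1..<n+2] @ [n + 2]" by simp
  then show ?case using Suc by (simp add: xy_word_Suc rhs_block_def del: upt_Suc)
qed

lemma xy_word_eq_concat_rhs_block:
  "1 \<le> s \<Longrightarrow> xy_word s (\<lambda>i. a i - \<delta> i) (\<lambda>i. b i - \<epsilon> (i + 1))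
     = concat (map (\<lambda>i. rhs_block a b s i (\<delta> i) (\<epsilon> i)) [1..<s+1+1])"
  using concat_rhs_block_prefix[of s s a b \<delta> \<epsilon>] by simp

lemma prod_zero_at_point:
  "finite A \<Longrightarrow> (\<Prod>i\<in>A. if i = c \<and> P i then 0 else 1 :: real) = (if c \<in> A \<and> P c then 0 else 1)"
  by (induction A rule: finite_induct) auto

lemma prod_lhs_weight:
  assumes "1 \<le> s"
  shows "(\<Prod>i\<in>{1..s}. lhs_weight a b s q \<theta> i (\<delta> i) (\<epsilon> i))
    = (if \<delta> 1 < a 1 \<and> \<epsilon> s < b s
       then (- \<theta>) ^ (\<Sum>i=1..s. (1 - \<delta> i) * (1 - \<epsilon> i)) * (1 - q) ^ (\<Sum>i=1..s. \<delta> i * \<epsilon> i) else 0)"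
proof -
  have "(\<Prod>i\<in>{1..s}. lhs_weight a b s q \<theta> i (\<delta> i) (\<epsilon> i))
      = (\<Prod>i\<in>{1..s}. (- \<theta>) ^ ((1 - \<delta> i) * (1 - \<epsilon> i))) * (\<Prod>i\<in>{1..s}. (1 - q) ^ (\<delta> i * \<epsilon> i))
        * (\<Prod>i\<in>{1..s}. if i = 1 \<and> \<not> \<delta> i < a 1 then 0 else 1)
        * (\<Prod>i\<in>{1..s}. if i = s \<and> \<not> \<epsilon> i < b s then 0 else 1)"
    unfolding lhs_weight_def block_weight_def prod.distrib ..
  then show ?thesis
    using assms by (simp only: power_sum prod_zero_at_point[OF finite_atLeastAtMost]) simp
qed

lemma prod_rhs_weight:
  assumes "1 \<le> s"
  shows "(\<Prod>i\<in>{1..s+1}. rhs_weight a b s q t i (\<delta> i) (\<epsilon> i))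
    = (if \<delta> (s + 1) = 0 \<and> \<delta> 1 < a 1 \<and> \<epsilon> 1 = 0 \<and> \<epsilon> (s + 1) < b s
       then (- t) ^ (\<Sum>i=1..s+1. (1 - \<delta> i) * (1 - \<epsilon> i)) * (1 - q) ^ (\<Sum>i=1..s+1. \<delta> i * \<epsilon> i) else 0)"
proof -
  have "(\<Prod>i\<in>{1..s+1}. rhs_weight a b s q t i (\<delta> i) (\<epsilon> i))
      = (\<Prod>i\<in>{1..s+1}. (- t) ^ ((1 - \<delta> i) * (1 - \<epsilon> i))) * (\<Prod>i\<in>{1..s+1}. (1 - q) ^ (\<delta> i * \<epsilon> i))
        * (\<Prod>i\<in>{1..s+1}. if i = s + 1 \<and> \<delta> i \<noteq> 0 then 0 else 1)
        * (\<Prod>i\<in>{1..s+1}. if i = 1 \<and> \<epsilon> i \<noteq> 0 then 0 else 1)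
        * (\<Prod>i\<in>{1..s+1}. if i = 1 \<and> \<not> \<delta> i < a 1 then 0 else 1)
        * (\<Prod>i\<in>{1..s+1}. if i = s + 1 \<and> \<not> \<epsilon> i < b s then 0 else 1)"
    unfolding rhs_weight_def block_weight_def prod.distrib ..
  then show ?thesis
    using assms by (simp only: power_sum prod_zero_at_point[OF finite_atLeastAtMost]) simp
qed

lemma finite_PiE_01: "finite ({1..n::nat} \<rightarrow>\<^sub>E {0, 1::nat})"
  by (rule finite_PiE) auto

lemma finite_PiE_01_filter: "finite {\<delta> \<in> {1..n::nat} \<rightarrow>\<^sub>E {0, 1::nat}. P \<delta>}"
  using finite_PiE_01 by (rule finite_subset[rotated]) blast

lemma if_sum_eq_sum_if: "(if P then sum f A else 0) = (\<Sum>x\<in>A. if P then f x else 0)"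
  by simp

lemma (in q_param) fq_combination_eq_suminf:
  assumes fin: "finite A" "finite B" and bound: "y_den_bound q \<theta> k"
    and words: "\<And>x y. x \<in> A \<Longrightarrow> y \<in> B \<Longrightarrow> (\<exists>w'. w x y = LX # w') \<and> last (w x y) = LY"
  shows "summable (\<lambda>m. \<Sum>x\<in>A. \<Sum>y\<in>B. c x y * word_op q \<theta> (w x y) delta0 m)"
    and "(\<Sum>x\<in>A. \<Sum>y\<in>B. complex_of_real (c x y) * fq q (w x y) (complex_of_real \<theta>))
      = complex_of_real (\<Sum>m. \<Sum>x\<in>A. \<Sum>y\<in>B. c x y * word_op q \<theta> (w x y) delta0 m)"
proof -
  have sums: "(\<lambda>m. word_op q \<theta> (w x y) delta0 m) sums (\<Sum>m. word_op q \<theta> (w x y) delta0 m)"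
    if xy: "x \<in> A" "y \<in> B" for x y
  proof -
    obtain w' where "w x y = LX # w'" using words[OF xy] by blast
    then show ?thesis
      using summable_x_coeff_mult[OF poly_bounded_word_op[OF bound poly_bounded_delta0, of w']]
      by (simp add: summable_sums)
  qed
  have fq: "fq q (w x y) (complex_of_real \<theta>) = complex_of_real (\<Sum>m. word_op q \<theta> (w x y) delta0 m)"
    if xy: "x \<in> A" "y \<in> B" for x y
    using words[OF xy] by (intro fq_eq_suminf_word_op[OF bound _ _ sums[OF xy]]) auto
  have "(\<lambda>m. \<Sum>x\<in>A. \<Sum>y\<in>B. c x y * word_op q \<theta> (w x y) delta0 m)
      sums (\<Sum>x\<in>A. \<Sum>y\<in>B. c x y * (\<Sum>m. word_op q \<theta> (w x y) delta0 m))"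
    using sums by (intro sums_sum sums_mult) auto
  then show "summable (\<lambda>m. \<Sum>x\<in>A. \<Sum>y\<in>B. c x y * word_op q \<theta> (w x y) delta0 m)"
    and "(\<Sum>x\<in>A. \<Sum>y\<in>B. complex_of_real (c x y) * fq q (w x y) (complex_of_real \<theta>))
      = complex_of_real (\<Sum>m. \<Sum>x\<in>A. \<Sum>y\<in>B. c x y * word_op q \<theta> (w x y) delta0 m)"
    unfolding of_real_sum of_real_mult by (auto simp: sums_iff fq intro!: sum.cong)
qed

context dual_setting
begin

lemma L_s_eq_sum_words:
  "L s m = (\<Sum>\<delta>\<in>{\<delta>\<in>{1..s} \<rightarrow>\<^sub>E {0,1}. \<delta> 1 < a 1}. \<Sum>\<epsilon>\<in>{\<epsilon>\<in>{1..s} \<rightarrow>\<^sub>E {0,1}. \<epsilon> s < b s}.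
      (- \<theta>) ^ (\<Sum>i=1..s. (1 - \<delta> i) * (1 - \<epsilon> i)) * (1 - q) ^ (\<Sum>i=1..s. \<delta> i * \<epsilon> i)
      * word_op q \<theta> (xy_word s (\<lambda>i. a i - \<delta> i) (\<lambda>i. b i - \<epsilon> i)) delta0 m)"
proof -
  have "L s m = block_comp q \<theta> (lhs_weight a b s q \<theta>) (lhs_block a b) s delta0 m"
    using block_comp_block_tail[of s s] by simp
  also have "\<dots> = (\<Sum>\<delta>\<in>{1..s} \<rightarrow>\<^sub>E {0,1}. \<Sum>\<epsilon>\<in>{1..s} \<rightarrow>\<^sub>E {0,1}.
      (\<Prod>i\<in>{1..s}. lhs_weight a b s q \<theta> i (\<delta> i) (\<epsilon> i))
      * word_op q \<theta> (concat (map (\<lambda>i. lhs_block a b i (\<delta> i) (\<epsilon> i)) [1..<s+1])) delta0 m)"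
    by (rule sum_PiE_block_words_eq_block_comp[symmetric])
  also have "\<dots> = (\<Sum>\<delta>\<in>{1..s} \<rightarrow>\<^sub>E {0,1}. \<Sum>\<epsilon>\<in>{1..s} \<rightarrow>\<^sub>E {0,1}.
      if \<delta> 1 < a 1 then if \<epsilon> s < b s then (- \<theta>) ^ (\<Sum>i=1..s. (1 - \<delta> i) * (1 - \<epsilon> i))
        * (1 - q) ^ (\<Sum>i=1..s. \<delta> i * \<epsilon> i)
        * word_op q \<theta> (xy_word s (\<lambda>i. a i - \<delta> i) (\<lambda>i. b i - \<epsilon> i)) delta0 m else 0 else 0)"
    unfolding prod_lhs_weight[OF s_pos] xy_word_eq_concat_lhs_block by (intro sum.cong refl) simp
  also have "\<dots> = (\<Sum>\<delta>\<in>{\<delta>\<in>{1..s} \<rightarrow>\<^sub>E {0,1}. \<delta> 1 < a 1}. \<Sum>\<epsilon>\<in>{\<epsilon>\<in>{1..s} \<rightarrow>\<^sub>E {0,1}. \<epsilon> s < b s}.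
      (- \<theta>) ^ (\<Sum>i=1..s. (1 - \<delta> i) * (1 - \<epsilon> i)) * (1 - q) ^ (\<Sum>i=1..s. \<delta> i * \<epsilon> i)
      * word_op q \<theta> (xy_word s (\<lambda>i. a i - \<delta> i) (\<lambda>i. b i - \<epsilon> i)) delta0 m)"
    by (simp only: sum.inter_filter[OF finite_PiE_01] if_sum_eq_sum_if)
  finally show ?thesis .
qed

lemma R_Suc_s_div_eq_sum_words:
  "R (Suc s) m / - \<theta>' = (\<Sum>\<delta>\<in>{\<delta>\<in>{1..s+1} \<rightarrow>\<^sub>E {0,1}. \<delta> (s+1) = 0 \<and> \<delta> 1 < a 1}.
      \<Sum>\<epsilon>\<in>{\<epsilon>\<in>{1..s+1} \<rightarrow>\<^sub>E {0,1}. \<epsilon> 1 = 0 \<and> \<epsilon> (s+1) < b s}.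
      (- \<theta>') powi (int (\<Sum>i=1..s+1. (1 - \<delta> i) * (1 - \<epsilon> i)) - 1) * (1 - q) ^ (\<Sum>i=1..s+1. \<delta> i * \<epsilon> i)
      * word_op q \<theta>' (xy_word s (\<lambda>i. a i - \<delta> i) (\<lambda>i. b i - \<epsilon> (i + 1))) delta0 m)"
proof -
  have "- \<theta>' \<noteq> 0" using theta'_neg by simp
  have power: "(- \<theta>') ^ n = - \<theta>' * (- \<theta>') powi (int n - 1)" for n
    using power_int_minus_mult[of "- \<theta>'" "int n"] theta'_neg by (simp add: mult.commute)
  have "R (Suc s) m = block_comp q \<theta>' (rhs_weight a b s q \<theta>') (rhs_block a b s) (s + 1) delta0 m"
    using block_comp_block_tail[of "Suc s" "Suc s"] by simp
  also have "\<dots> = (\<Sum>\<delta>\<in>{1..s+1} \<rightarrow>\<^sub>E {0,1}. \<Sum>\<epsilon>\<in>{1..s+1} \<rightarrow>\<^sub>E {0,1}.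
      (\<Prod>i\<in>{1..s+1}. rhs_weight a b s q \<theta>' i (\<delta> i) (\<epsilon> i))
      * word_op q \<theta>' (concat (map (\<lambda>i. rhs_block a b s i (\<delta> i) (\<epsilon> i)) [1..<s+1+1])) delta0 m)"
    by (rule sum_PiE_block_words_eq_block_comp[symmetric])
  also have "\<dots> = (\<Sum>\<delta>\<in>{1..s+1} \<rightarrow>\<^sub>E {0,1}. \<Sum>\<epsilon>\<in>{1..s+1} \<rightarrow>\<^sub>E {0,1}.
      if \<delta> (s+1) = 0 \<and> \<delta> 1 < a 1 then if \<epsilon> 1 = 0 \<and> \<epsilon> (s+1) < b s then
        - \<theta>' * ((- \<theta>') powi (int (\<Sum>i=1..s+1. (1 - \<delta> i) * (1 - \<epsilon> i)) - 1)
        * (1 - q) ^ (\<Sum>i=1..s+1. \<delta> i * \<epsilon> i)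
        * word_op q \<theta>' (xy_word s (\<lambda>i. a i - \<delta> i) (\<lambda>i. b i - \<epsilon> (i + 1))) delta0 m) else 0 else 0)"
    unfolding prod_rhs_weight[OF s_pos] xy_word_eq_concat_rhs_block[OF s_pos] power
    by (intro sum.cong refl) (simp add: mult.assoc)
  also have "\<dots> = (\<Sum>\<delta>\<in>{\<delta>\<in>{1..s+1} \<rightarrow>\<^sub>E {0,1}. \<delta> (s+1) = 0 \<and> \<delta> 1 < a 1}.
      \<Sum>\<epsilon>\<in>{\<epsilon>\<in>{1..s+1} \<rightarrow>\<^sub>E {0,1}. \<epsilon> 1 = 0 \<and> \<epsilon> (s+1) < b s}.
      - \<theta>' * ((- \<theta>') powi (int (\<Sum>i=1..s+1. (1 - \<delta> i) * (1 - \<epsilon> i)) - 1)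
        * (1 - q) ^ (\<Sum>i=1..s+1. \<delta> i * \<epsilon> i)
        * word_op q \<theta>' (xy_word s (\<lambda>i. a i - \<delta> i) (\<lambda>i. b i - \<epsilon> (i + 1))) delta0 m))"
    by (simp only: sum.inter_filter[OF finite_PiE_01] if_sum_eq_sum_if)
  finally show ?thesis
    by (simp only: sum_distrib_left[symmetric] nonzero_mult_div_cancel_left[OF \<open>- \<theta>' \<noteq> 0\<close>])
qed

lemma lhs_series:
  shows "summable (\<lambda>m. L s m)"
    and "(\<Sum>\<delta>\<in>{\<delta>\<in>{1..s} \<rightarrow>\<^sub>E {0,1}. \<delta> 1 < a 1}. \<Sum>\<epsilon>\<in>{\<epsilon>\<in>{1..s} \<rightarrow>\<^sub>E {0,1}. \<epsilon> s < b s}.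
       (- complex_of_real \<theta>) ^ (\<Sum>i=1..s. (1 - \<delta> i) * (1 - \<epsilon> i))
       * complex_of_real (1 - q) ^ (\<Sum>i=1..s. \<delta> i * \<epsilon> i)
       * fq q (xy_word s (\<lambda>i. a i - \<delta> i) (\<lambda>i. b i - \<epsilon> i)) (complex_of_real \<theta>))
      = complex_of_real (\<Sum>m. L s m)"
proof -
  have words: "(\<exists>w'. xy_word s (\<lambda>i. a i - \<delta> i) (\<lambda>i. b i - \<epsilon> i) = LX # w')
      \<and> last (xy_word s (\<lambda>i. a i - \<delta> i) (\<lambda>i. b i - \<epsilon> i)) = LY"
    if "\<delta> \<in> {\<delta>\<in>{1..s} \<rightarrow>\<^sub>E {0,1}. \<delta> 1 < a 1}" "\<epsilon> \<in> {\<epsilon>\<in>{1..s} \<rightarrow>\<^sub>E {0,1}. \<epsilon> s < b s}" for \<delta> \<epsilon>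
    using that s_pos by (intro conjI xy_word_starts_LX xy_word_ends_LY) auto
  note combination = fq_combination_eq_suminf[where A = "{\<delta>\<in>{1..s} \<rightarrow>\<^sub>E {0,1}. \<delta> 1 < a 1}"
      and B = "{\<epsilon>\<in>{1..s} \<rightarrow>\<^sub>E {0,1}. \<epsilon> s < b s}"
      and w = "\<lambda>\<delta> \<epsilon>. xy_word s (\<lambda>i. a i - \<delta> i) (\<lambda>i. b i - \<epsilon> i)"
      and c = "\<lambda>\<delta> \<epsilon>. (- \<theta>) ^ (\<Sum>i=1..s. (1 - \<delta> i) * (1 - \<epsilon> i)) * (1 - q) ^ (\<Sum>i=1..s. \<delta> i * \<epsilon> i)",
      OF finite_PiE_01_filter finite_PiE_01_filter bound_theta words]
  show "summable (\<lambda>m. L s m)"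
    unfolding L_s_eq_sum_words by (rule combination(1))
  show "(\<Sum>\<delta>\<in>{\<delta>\<in>{1..s} \<rightarrow>\<^sub>E {0,1}. \<delta> 1 < a 1}. \<Sum>\<epsilon>\<in>{\<epsilon>\<in>{1..s} \<rightarrow>\<^sub>E {0,1}. \<epsilon> s < b s}.
       (- complex_of_real \<theta>) ^ (\<Sum>i=1..s. (1 - \<delta> i) * (1 - \<epsilon> i))
       * complex_of_real (1 - q) ^ (\<Sum>i=1..s. \<delta> i * \<epsilon> i)
       * fq q (xy_word s (\<lambda>i. a i - \<delta> i) (\<lambda>i. b i - \<epsilon> i)) (complex_of_real \<theta>))
      = complex_of_real (\<Sum>m. L s m)"
    unfolding L_s_eq_sum_words using combination(2) by simp
qed

lemma rhs_series:
  shows "summable (\<lambda>m. R (Suc s) m)"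
    and "(\<Sum>\<delta>\<in>{\<delta>\<in>{1..s+1} \<rightarrow>\<^sub>E {0,1}. \<delta> (s+1) = 0 \<and> \<delta> 1 < a 1}.
       \<Sum>\<epsilon>\<in>{\<epsilon>\<in>{1..s+1} \<rightarrow>\<^sub>E {0,1}. \<epsilon> 1 = 0 \<and> \<epsilon> (s+1) < b s}.
       (- complex_of_real \<theta>') powi (int (\<Sum>i=1..s+1. (1 - \<delta> i) * (1 - \<epsilon> i)) - 1)
       * complex_of_real (1 - q) ^ (\<Sum>i=1..s+1. \<delta> i * \<epsilon> i)
       * fq q (xy_word s (\<lambda>i. a i - \<delta> i) (\<lambda>i. b i - \<epsilon> (i+1))) (complex_of_real \<theta>'))
      = complex_of_real ((\<Sum>m. R (Suc s) m) / - \<theta>')"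
proof -
  have words: "(\<exists>w'. xy_word s (\<lambda>i. a i - \<delta> i) (\<lambda>i. b i - \<epsilon> (i + 1)) = LX # w')
      \<and> last (xy_word s (\<lambda>i. a i - \<delta> i) (\<lambda>i. b i - \<epsilon> (i + 1))) = LY"
    if "\<delta> \<in> {\<delta>\<in>{1..s+1} \<rightarrow>\<^sub>E {0,1}. \<delta> (s+1) = 0 \<and> \<delta> 1 < a 1}"
      "\<epsilon> \<in> {\<epsilon>\<in>{1..s+1} \<rightarrow>\<^sub>E {0,1}. \<epsilon> 1 = 0 \<and> \<epsilon> (s+1) < b s}" for \<delta> \<epsilon>
    using that s_pos by (intro conjI xy_word_starts_LX xy_word_ends_LY) auto
  note combination = fq_combination_eq_suminf[where A = "{\<delta>\<in>{1..s+1} \<rightarrow>\<^sub>E {0,1}. \<delta> (s+1) = 0 \<and> \<delta> 1 < a 1}"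
      and B = "{\<epsilon>\<in>{1..s+1} \<rightarrow>\<^sub>E {0,1}. \<epsilon> 1 = 0 \<and> \<epsilon> (s+1) < b s}"
      and w = "\<lambda>\<delta> \<epsilon>. xy_word s (\<lambda>i. a i - \<delta> i) (\<lambda>i. b i - \<epsilon> (i + 1))"
      and c = "\<lambda>\<delta> \<epsilon>. (- \<theta>') powi (int (\<Sum>i=1..s+1. (1 - \<delta> i) * (1 - \<epsilon> i)) - 1)
        * (1 - q) ^ (\<Sum>i=1..s+1. \<delta> i * \<epsilon> i)",
      OF finite_PiE_01_filter finite_PiE_01_filter bound_theta' words]
  have "summable (\<lambda>m. R (Suc s) m / - \<theta>')"
    unfolding R_Suc_s_div_eq_sum_words by (rule combination(1))
  then show summable: "summable (\<lambda>m. R (Suc s) m)"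
    using theta'_neg by simp
  show "(\<Sum>\<delta>\<in>{\<delta>\<in>{1..s+1} \<rightarrow>\<^sub>E {0,1}. \<delta> (s+1) = 0 \<and> \<delta> 1 < a 1}.
       \<Sum>\<epsilon>\<in>{\<epsilon>\<in>{1..s+1} \<rightarrow>\<^sub>E {0,1}. \<epsilon> 1 = 0 \<and> \<epsilon> (s+1) < b s}.
       (- complex_of_real \<theta>') powi (int (\<Sum>i=1..s+1. (1 - \<delta> i) * (1 - \<epsilon> i)) - 1)
       * complex_of_real (1 - q) ^ (\<Sum>i=1..s+1. \<delta> i * \<epsilon> i)
       * fq q (xy_word s (\<lambda>i. a i - \<delta> i) (\<lambda>i. b i - \<epsilon> (i+1))) (complex_of_real \<theta>'))
      = complex_of_real ((\<Sum>m. R (Suc s) m) / - \<theta>')"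
    unfolding suminf_divide[OF summable, symmetric] R_Suc_s_div_eq_sum_words using combination(2) by simp
qed

lemma suminf_L_eq_suminf_R:
  "(a 1 = 1 \<Longrightarrow> s = 1 \<Longrightarrow> 2 \<le> b 1) \<Longrightarrow> (\<Sum>m. L s m) = (\<Sum>m. R (Suc s) m) / - \<theta>'"
  using sums_L_sums_R_eq summable_sums[OF lhs_series(1)] summable_sums[OF rhs_series(1)] by blast

end

theorem theorem3p5:
  fixes q \<theta> :: real and s :: nat and a b :: "nat \<Rightarrow> nat"
  assumes "0 < q" "q < 1" "1 \<le> s"
    and "\<forall>i\<in>{1..s}. 0 < a i" "\<forall>i\<in>{1..s}. 0 < b i"
    and "(\<Sum>i=1..s. a i + b i) > 2"
    and "\<bar>\<theta>\<bar> < 1 / q" "\<theta> \<noteq> 1 / q"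
  shows
   "(\<Sum>\<delta>\<in>{\<delta>\<in>{1..s} \<rightarrow>\<^sub>E {0,1}. \<delta> 1 < a 1}.
     \<Sum>\<epsilon>\<in>{\<epsilon>\<in>{1..s} \<rightarrow>\<^sub>E {0,1}. \<epsilon> s < b s}.
       (- complex_of_real \<theta>) ^ (\<Sum>i=1..s. (1 - \<delta> i) * (1 - \<epsilon> i))
       * complex_of_real (1 - q) ^ (\<Sum>i=1..s. \<delta> i * \<epsilon> i)
       * fq q (xy_word s (\<lambda>i. a i - \<delta> i) (\<lambda>i. b i - \<epsilon> i)) (complex_of_real \<theta>))
  = (\<Sum>\<delta>\<in>{\<delta>\<in>{1..s+1} \<rightarrow>\<^sub>E {0,1}. \<delta> (s+1) = 0 \<and> \<delta> 1 < a 1}.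
     \<Sum>\<epsilon>\<in>{\<epsilon>\<in>{1..s+1} \<rightarrow>\<^sub>E {0,1}. \<epsilon> 1 = 0 \<and> \<epsilon> (s+1) < b s}.
       (- complex_of_real (q * \<theta> - 1)) powi
           (int (\<Sum>i=1..s+1. (1 - \<delta> i) * (1 - \<epsilon> i)) - 1)
       * complex_of_real (1 - q) ^ (\<Sum>i=1..s+1. \<delta> i * \<epsilon> i)
       * fq q (xy_word s (\<lambda>i. a i - \<delta> i) (\<lambda>i. b i - \<epsilon> (i+1)))
              (complex_of_real (q * \<theta> - 1)))"
proof -
  \<comment> \<open>The hypothesis theta \<noteq> 1/q is implied by \<bar>theta\<bar> < 1/q.\<close>
  interpret dual_setting q a b s \<theta>
    using assms(1-5,7) by unfold_locales (auto simp: Suc_le_eq)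
  have "(\<Sum>m. L s m) = (\<Sum>m. R (Suc s) m) / - \<theta>'"
    by (rule suminf_L_eq_suminf_R) (use assms(6) in auto)
  then show ?thesis
    unfolding lhs_series(2) rhs_series(2) by simp
qed

end
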